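(* Let $p \neq 2$ be a prime and let $E_T$ be the elliptic curve over $\mathbf{F}_p(T)$ given by $y^2 = x^3 + T x^2 - T^3 x$. The point $Q = (-T, T^2) \in E_T(\mathbf{F}_p(T))$ has infinite order. In particular, for any field $L$ of characteristic $p$ and any $t \in L$ transcendental over $\mathbf{F}_p$, the point $Q_t = (-t, t^2)$ on the elliptic curve $E_t : y^2 = x^3 + t x^2 - t^3 x$ over $L$ (obtained via the embedding $\mathbf{F}_p(T) \to L$, $T \mapsto t$) has infinite order in $E_t(L)$. *)

theory Defs
  imports "HOL-Computational_Algebra.Polynomial" "HOL-Computational_Algebra.Fraction_Field"
    "Berlekamp_Zassenhaus.Finite_Field"
begin

text \<open>Points of a Weierstrass curve y^2 = x^3 + a2 x^2 + a4 x over a field, in affine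
  coordinates; None is the point at infinity O.\<close>
type_synonym 'a ec_point = "('a \<times> 'a) option"

definition on_curve :: "'a::field \<Rightarrow> 'a \<Rightarrow> 'a ec_point \<Rightarrow> bool" where
  "on_curve a2 a4 P = (case P of None \<Rightarrow> True
     | Some (x, y) \<Rightarrow> y ^ 2 = x ^ 3 + a2 * x ^ 2 + a4 * x)"

definition ec_add :: "'a::field \<Rightarrow> 'a \<Rightarrow> 'a ec_point \<Rightarrow> 'a ec_point \<Rightarrow> 'a ec_point" where
  "ec_add a2 a4 P R = (case P of None \<Rightarrow> R | Some (x1, y1) \<Rightarrow>
     (case R of None \<Rightarrow> P | Some (x2, y2) \<Rightarrow>
       (if x1 = x2 \<and> y1 + y2 = 0 then None
        else
          let l = (if x1 = x2 then (3 * x1 ^ 2 + 2 * a2 * x1 + a4) / (2 * y1)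
                   else (y2 - y1) / (x2 - x1));
              x3 = l ^ 2 - a2 - x1 - x2;
              y3 = - (l * (x3 - x1) + y1)
          in Some (x3, y3))))"

primrec ec_mult :: "'a::field \<Rightarrow> 'a \<Rightarrow> nat \<Rightarrow> 'a ec_point \<Rightarrow> 'a ec_point" where
  "ec_mult a2 a4 0 P = None"
| "ec_mult a2 a4 (Suc n) P = ec_add a2 a4 P (ec_mult a2 a4 n P)"

definition ec_infinite_order :: "'a::field \<Rightarrow> 'a \<Rightarrow> 'a ec_point \<Rightarrow> bool" where
  "ec_infinite_order a2 a4 P = (\<forall>n::nat. n > 0 \<longrightarrow> ec_mult a2 a4 n P \<noteq> None)"

text \<open>t is transcendental over the prime subfield (the image of the integers):
  no nonzero polynomial with coefficients in the prime subfield vanishes at t.\<close>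
definition transcendental_over_prime_field :: "'a::field \<Rightarrow> bool" where
  "transcendental_over_prime_field t =
     (\<forall>q :: 'a poly. q \<noteq> 0 \<and> (\<forall>i. coeff q i \<in> range of_int) \<longrightarrow> poly q t \<noteq> 0)"

end

theory Submission
  imports Defs "HOL-Computational_Algebra.Polynomial_Factorial"
begin

text \<open>
  Put T = W^(-4) in the rational function field F(W). The substitution
  (x, y) = (W^(-6) X, W^(-9) Y) turns E_T into Y^2 = X^3 + W^2 X^2 - X
  and (-T, T^2) into Q = (-W^2, W). Let X_n be the x-coordinate of nQ. The orders of X_n
  at W = 0 and at W = \<infinity> alternate between two patterns (pole type for even n, zero type for
  odd n), and these control the cancellation in X_(n+1) + X_(n-1) = N / (X_n + W^2)^2 well
  enough to give 2 h(X_n) \<le> h(X_(n+1)) + h(X_(n-1)) for the naive height h (the larger of the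
  degrees of numerator and denominator). Since h(X_1) = 2 and h(X_2) = 8, the heights grow by at
  least 6 at each step, so nQ is never the point at infinity.

  For the specialisation take F = L: the rational functions in W^4 with integer coefficients
  form a subfield of L(W) which embeds into L by W^4 \<mapsto> 1/t when t is transcendental. The
  embedding commutes with the group law and maps (-T, T^2) to (-t, t^2). The statement over
  F_p(T) is the case L = F_p(T), t = T.
\<close>

section \<open>Integer valuations\<close>

locale int_valuation =
  fixes v :: "'k::field \<Rightarrow> int"
  assumes val_mult: "x \<noteq> 0 \<Longrightarrow> y \<noteq> 0 \<Longrightarrow> v (x * y) = v x + v y"
    and val_add: "x \<noteq> 0 \<Longrightarrow> y \<noteq> 0 \<Longrightarrow> x + y \<noteq> 0 \<Longrightarrow> min (v x) (v y) \<le> v (x + y)"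
begin

lemma val_1 [simp]: "v 1 = 0"
  using val_mult[of 1 1] by simp

lemma val_uminus [simp]: "v (- x) = v x"
proof (cases "x = 0")
  case False
  have "v (-1) = 0"
    using val_mult[of "-1" "-1"] by simp
  then show ?thesis
    using val_mult[of "-1" x] False by simp
qed simp

lemma val_inverse: "x \<noteq> 0 \<Longrightarrow> v (inverse x) = - v x"
  using val_mult[of x "inverse x"] by simp

lemma val_divide: "x \<noteq> 0 \<Longrightarrow> y \<noteq> 0 \<Longrightarrow> v (x / y) = v x - v y"
  by (simp add: divide_inverse val_mult val_inverse)

lemma val_power: "x \<noteq> 0 \<Longrightarrow> v (x ^ n) = int n * v x"
  by (induction n) (simp_all add: val_mult algebra_simps)

definition val_ge :: "int \<Rightarrow> 'k \<Rightarrow> bool" where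
  "val_ge c x \<longleftrightarrow> x = 0 \<or> c \<le> v x"

lemma val_ge_0 [simp]: "val_ge c 0"
  by (simp add: val_ge_def)

lemma val_geI: "c \<le> v x \<Longrightarrow> val_ge c x"
  by (simp add: val_ge_def)

lemma val_ge_self: "val_ge (v x) x"
  by (simp add: val_ge_def)

lemma val_ge_mono: "val_ge c x \<Longrightarrow> d \<le> c \<Longrightarrow> val_ge d x"
  by (auto simp: val_ge_def)

lemma val_ge_add: "val_ge c x \<Longrightarrow> val_ge c y \<Longrightarrow> val_ge c (x + y)"
  using val_add[of x y] by (fastforce simp: val_ge_def)

lemma val_ge_uminus: "val_ge c x \<Longrightarrow> val_ge c (- x)"
  by (simp add: val_ge_def)

lemma val_ge_diff: "val_ge c x \<Longrightarrow> val_ge c y \<Longrightarrow> val_ge c (x - y)"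
  using val_ge_add[of c x "- y"] by (simp add: val_ge_uminus)

lemma val_ge_mult: "val_ge c x \<Longrightarrow> val_ge d y \<Longrightarrow> val_ge (c + d) (x * y)"
  by (cases "x = 0"; cases "y = 0") (auto simp: val_ge_def val_mult)

lemma val_ge_divide: "val_ge c x \<Longrightarrow> y \<noteq> 0 \<Longrightarrow> val_ge (c - v y) (x / y)"
  by (cases "x = 0") (auto simp: val_ge_def val_divide)

lemma val_add_dominant:
  assumes "x \<noteq> 0" "val_ge (v x + 1) y"
  shows "x + y \<noteq> 0" "v (x + y) = v x"
proof -
  have "x + y \<noteq> 0 \<and> v (x + y) = v x"
  proof (cases "y = 0")
    case False
    then have lt: "v x < v y"
      using assms by (simp add: val_ge_def)
    have nz: "x + y \<noteq> 0"
      using lt by (metis add_eq_0_iff val_uminus less_irrefl)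
    have "min (v x) (v y) \<le> v (x + y)"
      using val_add[OF assms(1) False nz] .
    moreover have "min (v (x + y)) (v (- y)) \<le> v (x + y + - y)"
      using val_add[of "x + y" "- y"] nz False assms(1) by simp
    ultimately show ?thesis
      using lt nz by simp
  qed (use assms in simp)
  then show "x + y \<noteq> 0" "v (x + y) = v x"
    by simp_all
qed

lemma val_diff_dominant:
  assumes "x \<noteq> 0" "val_ge (v x + 1) y"
  shows "x - y \<noteq> 0" "v (x - y) = v x"
  using val_add_dominant[OF assms(1) val_ge_uminus[OF assms(2)]] by simp_all

lemma val_square_diff:
  assumes "l \<noteq> 0" "val_ge (2 * v l + 1) x"
  shows "l\<^sup>2 - x \<noteq> 0" "v (l\<^sup>2 - x) = 2 * v l"
  using val_diff_dominant[of "l\<^sup>2" x] assms by (simp_all add: val_power)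

end

section \<open>Orders of a rational function at 0 and at infinity\<close>

lemma order_add_ge:
  fixes p q :: "'a::field poly"
  assumes "p + q \<noteq> 0"
  shows "min (order c p) (order c q) \<le> order c (p + q)"
proof -
  let ?m = "min (order c p) (order c q)"
  have "[:-c, 1:] ^ ?m dvd p" "[:-c, 1:] ^ ?m dvd q"
    by (meson min.cobounded1 min.cobounded2 order_divides)+
  then show ?thesis
    using assms order_divides by (blast intro: dvd_add)
qed

lemma Fract_eq_0_iff: "b \<noteq> 0 \<Longrightarrow> Fract a b = 0 \<longleftrightarrow> a = 0"
  by (simp add: Zero_fract_def eq_fract)

lemma CHAR_fract [simp]: "CHAR('a::idom fract) = CHAR('a)"
  by (rule CHAR_eqI) (simp_all add: of_nat_fract Fract_eq_0_iff of_nat_eq_0_iff_char_dvd)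

lemma two_neq_zero_iff_CHAR: "(2::'a::field) \<noteq> 0 \<longleftrightarrow> CHAR('a) \<noteq> 2"
proof -
  have "(2::'a) = 0 \<longleftrightarrow> CHAR('a) dvd 2"
    using of_nat_eq_0_iff_char_dvd[of 2] by simp
  also have "\<dots> \<longleftrightarrow> CHAR('a) = 2"
  proof
    assume "CHAR('a) dvd 2"
    then have "CHAR('a) \<le> 2" "CHAR('a) \<noteq> 0"
      by (auto dest: dvd_imp_le intro: Nat.gr0I)
    with CHAR_not_1[where 'a = 'a] show "CHAR('a) = 2"
      by linarith
  qed simp
  finally show ?thesis
    by simp
qed

lemma two_poly_fract_nonzero: "(2::'a::field) \<noteq> 0 \<Longrightarrow> (2::'a poly fract) \<noteq> 0"
  by (simp add: two_neq_zero_iff_CHAR)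

lemma of_int_fract: "(of_int k :: 'a::idom fract) = Fract (of_int k) 1"
proof (cases k rule: int_cases)
  case (neg n)
  have "(of_int k :: 'a fract) = - of_nat (Suc n)"
    using neg by simp
  also have "\<dots> = - Fract (of_nat (Suc n)) 1"
    by (simp only: of_nat_fract)
  also have "\<dots> = Fract (- of_nat (Suc n)) 1"
    by simp
  finally show ?thesis
    using neg by simp
qed (simp add: of_nat_fract)

text \<open>The value of extend_to_fract f at 0 is unspecified.\<close>
definition extend_to_fract :: "('a::idom \<Rightarrow> int) \<Rightarrow> 'a fract \<Rightarrow> int" where
  "extend_to_fract f x = (SOME k. \<exists>a b. a \<noteq> 0 \<and> b \<noteq> 0 \<and> x = Fract a b \<and> k = f a - f b)"

lemma extend_to_fract_Fract:
  assumes f: "\<And>p q. p \<noteq> 0 \<Longrightarrow> q \<noteq> 0 \<Longrightarrow> f (p * q) = f p + f q" and "a \<noteq> 0" "b \<noteq> 0"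
  shows "extend_to_fract f (Fract a b) = f a - f b"
  unfolding extend_to_fract_def
proof (rule some_equality)
  fix k
  assume "\<exists>a' b'. a' \<noteq> 0 \<and> b' \<noteq> 0 \<and> Fract a b = Fract a' b' \<and> k = f a' - f b'"
  then obtain a' b' where "a' \<noteq> 0" "b' \<noteq> 0" "a * b' = a' * b" "k = f a' - f b'"
    using assms(3) by (auto simp: eq_fract)
  with f[of a b'] f[of a' b] assms(2,3) show "k = f a - f b"
    by simp
qed (use assms in blast)

definition fract_order :: "'a::field \<Rightarrow> 'a poly fract \<Rightarrow> int" where
  "fract_order c = extend_to_fract (\<lambda>p. int (order c p))"

definition fract_order_inf :: "'a::field poly fract \<Rightarrow> int" where
  "fract_order_inf = extend_to_fract (\<lambda>p. - int (degree p))"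

lemma fract_order_Fract:
  "a \<noteq> 0 \<Longrightarrow> b \<noteq> 0 \<Longrightarrow> fract_order c (Fract a b) = int (order c a) - int (order c b)"
  unfolding fract_order_def by (rule extend_to_fract_Fract) (simp_all add: order_mult)

lemma fract_order_inf_Fract:
  "a \<noteq> 0 \<Longrightarrow> b \<noteq> 0 \<Longrightarrow> fract_order_inf (Fract a b) = int (degree b) - int (degree a)"
  unfolding fract_order_inf_def by (subst extend_to_fract_Fract) (simp_all add: degree_mult_eq)

lemma Fract_nonzero_cases:
  fixes x :: "'a::idom fract"
  assumes "x \<noteq> 0"
  obtains a b where "x = Fract a b" "a \<noteq> 0" "b \<noteq> 0"
  using assms by (cases x rule: Fract_cases_nonzero) auto

lemma int_valuation_fract_order: "int_valuation (fract_order c)"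
proof
  fix x y :: "'a::field poly fract"
  assume "x \<noteq> 0" "y \<noteq> 0"
  then obtain a b a' b' where x: "x = Fract a b" "a \<noteq> 0" "b \<noteq> 0"
    and y: "y = Fract a' b'" "a' \<noteq> 0" "b' \<noteq> 0"
    by (meson Fract_nonzero_cases)
  then show "fract_order c (x * y) = fract_order c x + fract_order c y"
    by (simp add: fract_order_Fract order_mult)
  assume "x + y \<noteq> 0"
  then have nz: "a * b' + a' * b \<noteq> 0"
    using x y by (auto simp: fract_collapse)
  then show "min (fract_order c x) (fract_order c y) \<le> fract_order c (x + y)"
    using x y order_add_ge[OF nz, of c] by (simp add: fract_order_Fract order_mult)
qed

lemma int_valuation_fract_order_inf: "int_valuation fract_order_inf"
proof
  fix x y :: "'a::field poly fract"
  assume "x \<noteq> 0" "y \<noteq> 0"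
  then obtain a b a' b' where x: "x = Fract a b" "a \<noteq> 0" "b \<noteq> 0"
    and y: "y = Fract a' b'" "a' \<noteq> 0" "b' \<noteq> 0"
    by (meson Fract_nonzero_cases)
  then show "fract_order_inf (x * y) = fract_order_inf x + fract_order_inf y"
    by (simp add: fract_order_inf_Fract degree_mult_eq)
  assume "x + y \<noteq> 0"
  then have nz: "a * b' + a' * b \<noteq> 0"
    using x y by (auto simp: fract_collapse)
  then show "min (fract_order_inf x) (fract_order_inf y) \<le> fract_order_inf (x + y)"
    using x y degree_add_le_max[of "a * b'" "a' * b"]
    by (simp add: fract_order_inf_Fract degree_mult_eq)
qed

interpretation ord0: int_valuation "fract_order (0::'a::field)"
  by (rule int_valuation_fract_order)

interpretation ord_inf: int_valuation "fract_order_inf :: 'a::field poly fract \<Rightarrow> int"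
  by (rule int_valuation_fract_order_inf)

lemma to_fract_power [simp]: "to_fract (x ^ n) = to_fract x ^ n"
  by (induction n) simp_all

lemma to_fract_numeral [simp]: "to_fract (numeral k) = numeral k"
  using Fract_of_nat_eq[of "numeral k"] by (simp add: to_fract_def)

lemma fract_order_numeral:
  assumes "(numeral k :: 'a::field) \<noteq> 0"
  shows "fract_order c (numeral k :: 'a poly fract) = 0" "fract_order_inf (numeral k :: 'a poly fract) = 0"
proof -
  have k: "(numeral k :: 'a poly fract) = to_fract [:numeral k:]"
    by (metis to_fract_numeral numeral_poly)
  show "fract_order c (numeral k :: 'a poly fract) = 0" "fract_order_inf (numeral k :: 'a poly fract) = 0"
    unfolding k using assms
    by (simp_all add: to_fract_def fract_order_Fract fract_order_inf_Fract order_0I)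
qed

section \<open>Reduced fractions and the naive height\<close>

lemma poly_bezout:
  fixes a b :: "'a::field poly"
  assumes "b \<noteq> 0"
  obtains d u v where "d = u * a + v * b" "d \<noteq> 0" "d dvd a" "d dvd b"
proof -
  let ?I = "{p. \<exists>u v. p = u * a + v * b \<and> p \<noteq> 0}"
  have "b = 0 * a + 1 * b"
    by simp
  with assms have "b \<in> ?I"
    by blast
  then obtain d where "d \<in> ?I" and d_min: "\<And>p. p \<in> ?I \<Longrightarrow> degree d \<le> degree p"
    using ex_has_least_nat[of "\<lambda>p. p \<in> ?I" b degree] by blast
  then obtain u v where d: "d = u * a + v * b" "d \<noteq> 0"
    by blast
  have "d dvd u' * a + v' * b" for u' v'
  proof (rule ccontr)
    assume nd: "\<not> d dvd u' * a + v' * b"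
    define q where "q = (u' * a + v' * b) div d"
    have "(u' * a + v' * b) mod d = (u' - q * u) * a + (v' - q * v) * b"
      using div_mult_mod_eq[of "u' * a + v' * b" d] d(1) unfolding q_def
      by (simp add: algebra_simps)
    moreover have "(u' * a + v' * b) mod d \<noteq> 0"
      using nd by (simp add: mod_eq_0_iff_dvd)
    ultimately have "(u' * a + v' * b) mod d \<in> ?I"
      by blast
    then have "degree d \<le> degree ((u' * a + v' * b) mod d)"
      by (rule d_min)
    with degree_mod_less_degree[OF d(2) nd] show False
      by simp
  qed
  from this[of 1 0] this[of 0 1] show ?thesis
    using that d by simp
qed

lemma coprime_poly_bezout:
  fixes a b :: "'a::field poly"
  assumes "coprime a b"
  obtains u v where "u * a + v * b = 1"
proof (cases "b = 0")
  case True
  with assms obtain e where "a * e = 1"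
    by (metis coprime_0_right_iff dvdE)
  with that[of e 0] show ?thesis
    by (simp add: mult.commute)
next
  case False
  then obtain d u v where d: "d = u * a + v * b" "d \<noteq> 0" "d dvd a" "d dvd b"
    by (rule poly_bezout)
  then obtain e where "d * e = 1"
    using assms coprime_common_divisor by (metis dvdE)
  with d(1) have "(e * u) * a + (e * v) * b = 1"
    by (simp add: algebra_simps)
  with that show ?thesis .
qed

lemma coprime_dvd_mult_poly:
  fixes a b c :: "'a::field poly"
  assumes "coprime a c" "a dvd c * b"
  shows "a dvd b"
proof -
  obtain u v where uv: "u * a + v * c = 1"
    using assms(1) by (rule coprime_poly_bezout)
  have "b = a * (u * b) + v * (c * b)"
    using arg_cong[OF uv, of "\<lambda>x. x * b"] by (simp add: algebra_simps)
  also have "a dvd \<dots>"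
    using assms(2) by simp
  finally show ?thesis .
qed

lemma coprime_mult_right_poly:
  fixes a b c :: "'a::field poly"
  assumes "coprime a b" "coprime a c"
  shows "coprime a (b * c)"
proof (rule coprimeI)
  fix d
  assume d: "d dvd a" "d dvd b * c"
  have "coprime d b"
    using coprime_divisors[OF d(1) dvd_refl assms(1)] .
  then have "d dvd c"
    using d(2) by (rule coprime_dvd_mult_poly)
  with d(1) assms(2) show "is_unit d"
    using coprime_common_divisor by blast
qed

lemma coprime_power_right_poly:
  fixes a b :: "'a::field poly"
  shows "coprime a b \<Longrightarrow> coprime a (b ^ n)"
  by (induction n) (simp_all add: coprime_mult_right_poly)

lemma coprime_power_left_poly:
  fixes a b :: "'a::field poly"
  shows "coprime a b \<Longrightarrow> coprime (a ^ n) b"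
  using coprime_power_right_poly[of b a n] by (simp add: coprime_commute)

lemma Fract_coprime_cases:
  fixes x :: "'a::field poly fract"
  obtains a b where "b \<noteq> 0" "coprime a b" "x = Fract a b"
proof -
  obtain a0 b0 where x: "x = Fract a0 b0" "b0 \<noteq> 0"
    by (cases x) auto
  obtain d u v where d: "d = u * a0 + v * b0" "d \<noteq> 0" "d dvd a0" "d dvd b0"
    by (rule poly_bezout[OF x(2)])
  then obtain a b where a: "a0 = d * a" and b: "b0 = d * b"
    by (meson dvdE)
  have "d * (u * a + v * b) = u * (d * a) + v * (d * b)"
    by (simp add: algebra_simps)
  also have "\<dots> = d * 1"
    by (simp only: mult_1_right a[symmetric] b[symmetric] d(1)[symmetric])
  finally have "d * (u * a + v * b) = d * 1" .
  then have uv: "u * a + v * b = 1"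
    using d(2) by simp
  have "coprime a b"
  proof (rule coprimeI)
    fix c
    assume "c dvd a" "c dvd b"
    then have "c dvd u * a + v * b"
      by simp
    with uv show "is_unit c"
      by simp
  qed
  moreover have "b \<noteq> 0" "x = Fract a b"
    using x d(2) unfolding a b by (auto simp: mult_fract_cancel)
  ultimately show ?thesis
    using that by blast
qed

lemma coprime_order_eq_0:
  fixes a b :: "'a::field poly"
  assumes "coprime a b"
  shows "order c a = 0 \<or> order c b = 0"
proof (rule ccontr)
  assume "\<not> ?thesis"
  then have "[:-c, 1:] dvd a" "[:-c, 1:] dvd b"
    using order_divides[of c 1] by (auto simp: Suc_le_eq)
  with assms have "is_unit [:-c, 1:]"
    using coprime_common_divisor by blast
  then show False
    by (simp add: is_unit_iff_degree)
qed

definition naive_height :: "'a::field poly fract \<Rightarrow> nat" where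
  "naive_height x = (LEAST n. \<exists>a b. b \<noteq> 0 \<and> x = Fract a b \<and> n = max (degree a) (degree b))"

lemma naive_height_Fract:
  fixes a b :: "'a::field poly"
  assumes "b \<noteq> 0" "coprime a b"
  shows "naive_height (Fract a b) = max (degree a) (degree b)"
proof -
  have "max (degree a) (degree b) \<le> max (degree c) (degree d)"
    if "d \<noteq> 0" "Fract a b = Fract c d" for c d
  proof -
    have eq: "a * d = c * b"
      using that assms by (simp add: eq_fract)
    have "b dvd a * d"
      by (simp add: eq)
    then have "b dvd d"
      using coprime_dvd_mult_poly[of b a d] assms(2) by (simp add: coprime_commute)
    then have db: "degree b \<le> degree d"
      using \<open>d \<noteq> 0\<close> by (rule dvd_imp_degree_le)
    have da: "degree a \<le> degree c"
    proof (cases "a = 0")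
      case False
      with eq \<open>d \<noteq> 0\<close> have "c \<noteq> 0"
        by auto
      have "b * c = a * d"
        using eq by (simp add: mult.commute)
      then have "a dvd b * c"
        by simp
      with assms(2) have "a dvd c"
        by (rule coprime_dvd_mult_poly)
      then show ?thesis
        using \<open>c \<noteq> 0\<close> by (rule dvd_imp_degree_le)
    qed simp
    from da db show ?thesis
      by (rule max.mono)
  qed
  then show ?thesis
    unfolding naive_height_def by (intro Least_equality) (use assms in blast, blast)
qed

lemma order_denominator:
  fixes a b :: "'a::field poly"
  assumes "b \<noteq> 0" "coprime a b" "a \<noteq> 0"
  shows "int (order c b) = max 0 (- fract_order c (Fract a b))"
  using coprime_order_eq_0[OF assms(2), of c] assms by (simp add: fract_order_Fract) linarith

lemma naive_height_denominator:
  fixes a b :: "'a::field poly"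
  assumes "b \<noteq> 0" "coprime a b" "a \<noteq> 0"
  shows "int (naive_height (Fract a b)) = int (degree b) + max 0 (- fract_order_inf (Fract a b))"
  using assms by (simp add: naive_height_Fract fract_order_inf_Fract)

lemma coprime_linear_poly:
  fixes p :: "'a::field poly"
  assumes "\<not> [:-c, 1:] dvd p"
  shows "coprime p [:-c, 1:]"
proof (rule coprimeI)
  fix d
  assume d: "d dvd p" "d dvd [:-c, 1:]"
  then obtain e where e: "[:-c, 1:] = d * e"
    by blast
  then have "d \<noteq> 0" "e \<noteq> 0"
    by auto
  moreover have "degree (d * e) = 1"
    by (simp flip: e)
  ultimately have "degree d + degree e = 1"
    by (simp add: degree_mult_eq)
  then consider "degree d = 0" | "degree e = 0"
    by linarith
  then show "is_unit d"
  proof cases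
    case 2
    with \<open>e \<noteq> 0\<close> have "is_unit e"
      by (simp add: is_unit_iff_degree)
    with e d(1) have "[:-c, 1:] dvd p"
      by (metis dvd_mult_unit_iff dvd_refl dvd_trans)
    with assms show ?thesis
      by contradiction
  qed (use \<open>d \<noteq> 0\<close> in \<open>simp add: is_unit_iff_degree\<close>)
qed

lemma order_0_decomp:
  fixes p :: "'a::field poly"
  assumes "p \<noteq> 0"
  obtains q where "p = [:0, 1:] ^ order 0 p * q" "q \<noteq> 0" "coprime q [:0, 1:]"
    "degree p = order 0 p + degree q"
proof -
  obtain q where q: "p = [:0, 1:] ^ order 0 p * q" "\<not> [:0, 1:] dvd q"
    using order_decomp[OF assms, of 0] by auto
  moreover from q assms have "q \<noteq> 0"
    by auto
  moreover have "degree p = order 0 p + degree q"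
    using arg_cong[OF q(1), of degree] \<open>q \<noteq> 0\<close> by (simp add: degree_mult_eq degree_linear_power)
  ultimately show ?thesis
    using that coprime_linear_poly[of 0 q] by simp
qed

section \<open>The group law on y^2 = x^3 + a2 x^2 + a4 x\<close>

definition ec_slope :: "'k::field \<Rightarrow> 'k \<Rightarrow> 'k \<Rightarrow> 'k \<Rightarrow> 'k \<Rightarrow> 'k \<Rightarrow> 'k" where
  "ec_slope a2 a4 x1 y1 x2 y2 =
     (if x1 = x2 then (3 * x1 ^ 2 + 2 * a2 * x1 + a4) / (2 * y1) else (y2 - y1) / (x2 - x1))"

lemma on_curve_None [simp]: "on_curve a2 a4 None"
  by (simp add: on_curve_def)

lemma ec_add_None_left [simp]: "ec_add a2 a4 None R = R"
  by (simp add: ec_add_def)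

lemma ec_add_None_right [simp]: "ec_add a2 a4 P None = P"
  by (cases P) (auto simp: ec_add_def)

lemma ec_add_Some_Some:
  "ec_add a2 a4 (Some (x1, y1)) (Some (x2, y2)) =
    (if x1 = x2 \<and> y1 + y2 = 0 then None
     else let l = ec_slope a2 a4 x1 y1 x2 y2; x3 = l\<^sup>2 - a2 - x1 - x2
       in Some (x3, - (l * (x3 - x1) + y1)))"
  by (simp add: ec_add_def ec_slope_def Let_def)

lemma ec_add_chord_x:
  "x1 \<noteq> x2 \<Longrightarrow> \<exists>y3. ec_add a2 a4 (Some (x1, y1)) (Some (x2, y2)) =
    Some (((y2 - y1) / (x2 - x1))\<^sup>2 - a2 - x1 - x2, y3)"
  by (simp add: ec_add_Some_Some ec_slope_def Let_def)

lemma ec_slope_line: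
  fixes a2 a4 x1 y1 x2 y2 :: "'k::field"
  assumes "on_curve a2 a4 (Some (x1, y1))" "on_curve a2 a4 (Some (x2, y2))"
    and "\<not> (x1 = x2 \<and> y1 + y2 = 0)"
  shows "y2 = y1 + ec_slope a2 a4 x1 y1 x2 y2 * (x2 - x1)"
proof (cases "x1 = x2")
  case True
  with assms(1,2) have "(y2 - y1) * (y2 + y1) = 0"
    by (simp add: on_curve_def algebra_simps power2_eq_square)
  with True assms(3) show ?thesis
    by (simp add: add.commute)
qed (simp add: ec_slope_def)

text \<open>The slope l of the chord (or tangent) through two points of the curve satisfies the
  equation obtained by substituting the line into the cubic and dividing out x - x1.\<close>
lemma ec_slope_chord:
  fixes a2 a4 x1 y1 x2 y2 :: "'k::field"
  assumes "(2::'k) \<noteq> 0" "on_curve a2 a4 (Some (x1, y1))" "on_curve a2 a4 (Some (x2, y2))"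
    and "\<not> (x1 = x2 \<and> y1 + y2 = 0)"
  defines "l \<equiv> ec_slope a2 a4 x1 y1 x2 y2"
  shows "2 * y1 * l + l\<^sup>2 * (x2 - x1) = x2\<^sup>2 + x1 * x2 + x1\<^sup>2 + a2 * (x1 + x2) + a4"
proof (cases "x1 = x2")
  case True
  with ec_slope_line[OF assms(2-4)] assms(4) have "y1 + y1 \<noteq> 0"
    by simp
  then have "2 * y1 \<noteq> 0"
    unfolding mult_2 .
  then have "l * (2 * y1) = 3 * x1 ^ 2 + 2 * a2 * x1 + a4"
    using True by (simp add: l_def ec_slope_def)
  moreover have "2 * y1 * l + l\<^sup>2 * (x2 - x1) = l * (2 * y1)"
    using True by simp
  moreover have "3 * x1 ^ 2 + 2 * a2 * x1 + a4 = x2\<^sup>2 + x1 * x2 + x1\<^sup>2 + a2 * (x1 + x2) + a4"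
    using True by (simp add: power2_eq_square)
  ultimately show ?thesis
    by simp
next
  case False
  have line: "y1 + l * (x2 - x1) = y2"
    using ec_slope_line[OF assms(2-4)] by (simp add: l_def)
  have "(x2 - x1) * (2 * y1 * l + l\<^sup>2 * (x2 - x1)) = (y1 + l * (x2 - x1))\<^sup>2 - y1\<^sup>2"
    by (simp add: power2_eq_square algebra_simps)
  also have "\<dots> = (x2 ^ 3 + a2 * x2\<^sup>2 + a4 * x2) - (x1 ^ 3 + a2 * x1\<^sup>2 + a4 * x1)"
    using assms(2,3) by (simp add: line on_curve_def)
  also have "\<dots> = (x2 - x1) * (x2\<^sup>2 + x1 * x2 + x1\<^sup>2 + a2 * (x1 + x2) + a4)"
    by (simp add: power2_eq_square power3_eq_cube algebra_simps)
  finally show ?thesis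
    using False by simp
qed

lemma third_point_on_curve:
  fixes l x1 x2 y1 a2 a4 :: "'k::comm_ring_1"
  assumes "y1\<^sup>2 = x1 ^ 3 + a2 * x1\<^sup>2 + a4 * x1"
    and "2 * y1 * l + l\<^sup>2 * (x2 - x1) = x2\<^sup>2 + x1 * x2 + x1\<^sup>2 + a2 * (x1 + x2) + a4"
  defines "x3 \<equiv> l\<^sup>2 - a2 - x1 - x2"
  shows "(- (l * (x3 - x1) + y1))\<^sup>2 = x3 ^ 3 + a2 * x3\<^sup>2 + a4 * x3"
proof -
  have "(- (l * (x3 - x1) + y1))\<^sup>2 - (x3 ^ 3 + a2 * x3\<^sup>2 + a4 * x3) =
    (y1\<^sup>2 - (x1 ^ 3 + a2 * x1\<^sup>2 + a4 * x1)) + (x3 - x1) *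
      (2 * y1 * l + l\<^sup>2 * (x2 - x1) - (x2\<^sup>2 + x1 * x2 + x1\<^sup>2 + a2 * (x1 + x2) + a4))"
    unfolding x3_def by (simp add: algebra_simps power2_eq_square power3_eq_cube)
  also have "\<dots> = 0"
    using assms(1,2) by simp
  finally show ?thesis
    by simp
qed

lemma on_curve_ec_add:
  fixes a2 a4 :: "'k::field"
  assumes "(2::'k) \<noteq> 0" "on_curve a2 a4 P" "on_curve a2 a4 R"
  shows "on_curve a2 a4 (ec_add a2 a4 P R)"
proof -
  consider "P = None \<or> R = None" | x1 y1 x2 y2 where "P = Some (x1, y1)" "R = Some (x2, y2)"
    by (cases P; cases R) auto
  then show ?thesis
  proof cases
    case (2 x1 y1 x2 y2)
    show ?thesis
    proof (cases "x1 = x2 \<and> y1 + y2 = 0")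
      case False
      have "y1\<^sup>2 = x1 ^ 3 + a2 * x1\<^sup>2 + a4 * x1"
        using assms(2) 2 by (simp add: on_curve_def)
      from third_point_on_curve[OF this ec_slope_chord[OF assms(1) assms(2,3)[unfolded 2] False]]
      show ?thesis
        using False by (simp add: 2 ec_add_Some_Some Let_def on_curve_def)
    qed (simp add: 2 ec_add_Some_Some)
  qed (use assms in auto)
qed

lemma on_curve_ec_mult:
  fixes a2 a4 :: "'k::field"
  assumes "(2::'k) \<noteq> 0" "on_curve a2 a4 P"
  shows "on_curve a2 a4 (ec_mult a2 a4 n P)"
  by (induction n) (simp_all add: on_curve_ec_add assms)

lemma ec_add_inverse_cancel:
  fixes a2 a4 :: "'k::field"
  assumes "on_curve a2 a4 (Some (x0, y0))" "on_curve a2 a4 (Some (x, y))"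
    and sum: "ec_add a2 a4 (Some (x0, y0)) (Some (x, y)) = Some (x3, y3)" and "x3 \<noteq> x0"
  shows "ec_add a2 a4 (Some (x0, - y0)) (Some (x3, y3)) = Some (x, y)"
proof -
  define l where "l = ec_slope a2 a4 x0 y0 x y"
  from sum have nc: "\<not> (x0 = x \<and> y0 + y = 0)" and x3: "x3 = l\<^sup>2 - a2 - x0 - x"
    and y3: "y3 = - (l * (x3 - x0) + y0)"
    by (auto simp: ec_add_Some_Some Let_def l_def split: if_splits)
  have y: "y = y0 + l * (x - x0)"
    using ec_slope_line[OF assms(1,2) nc] by (simp add: l_def)
  have "ec_slope a2 a4 x0 (- y0) x3 y3 = - l"
    using \<open>x3 \<noteq> x0\<close> y3 by (simp add: ec_slope_def field_simps)
  then show ?thesis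
    using \<open>x3 \<noteq> x0\<close> by (simp add: ec_add_Some_Some Let_def x3 y3 y algebra_simps)
qed

definition scale_point :: "'k::field \<Rightarrow> 'k ec_point \<Rightarrow> 'k ec_point" where
  "scale_point u = map_option (\<lambda>(x, y). (u\<^sup>2 * x, u ^ 3 * y))"

lemma scale_point_simps [simp]:
  "scale_point u None = None" "scale_point u (Some (x, y)) = Some (u\<^sup>2 * x, u ^ 3 * y)"
  by (simp_all add: scale_point_def)

lemma ec_slope_scale:
  fixes u :: "'k::field"
  assumes "u \<noteq> 0"
  shows "ec_slope (u\<^sup>2 * a2) (u ^ 4 * a4) (u\<^sup>2 * x1) (u ^ 3 * y1) (u\<^sup>2 * x2) (u ^ 3 * y2) =
    u * ec_slope a2 a4 x1 y1 x2 y2"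
proof (cases "x1 = x2")
  case True
  show ?thesis
  proof (cases "y1 = 0 \<or> (2::'k) = 0")
    case False
    with True assms show ?thesis
      by (simp add: ec_slope_def power2_eq_square power3_eq_cube power4_eq_xxxx field_simps)
  qed (use True in \<open>auto simp: ec_slope_def\<close>)
next
  case False
  with assms show ?thesis
    by (simp add: ec_slope_def power2_eq_square power3_eq_cube field_simps)
qed

lemma ec_add_scale_point:
  fixes u :: "'k::field"
  assumes "u \<noteq> 0"
  shows "ec_add (u\<^sup>2 * a2) (u ^ 4 * a4) (scale_point u P) (scale_point u R) =
    scale_point u (ec_add a2 a4 P R)"
proof -
  consider "P = None \<or> R = None" | x1 y1 x2 y2 where "P = Some (x1, y1)" "R = Some (x2, y2)"
    by (cases P; cases R) auto
  then show ?thesis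
  proof cases
    case (2 x1 y1 x2 y2)
    have cancel: "u ^ 3 * y1 + u ^ 3 * y2 = 0 \<longleftrightarrow> y1 + y2 = 0"
      using assms by (simp flip: distrib_left)
    have "ec_add (u\<^sup>2 * a2) (u ^ 4 * a4) (scale_point u P) (scale_point u R) =
      (if x1 = x2 \<and> y1 + y2 = 0 then None
       else let l = u * ec_slope a2 a4 x1 y1 x2 y2; x3 = l\<^sup>2 - u\<^sup>2 * a2 - u\<^sup>2 * x1 - u\<^sup>2 * x2
         in Some (x3, - (l * (x3 - u\<^sup>2 * x1) + u ^ 3 * y1)))"
      using assms by (simp add: 2 ec_add_Some_Some ec_slope_scale cancel)
    also have "\<dots> = scale_point u (ec_add a2 a4 P R)"
      by (simp add: 2 ec_add_Some_Some Let_def power2_eq_square power3_eq_cube algebra_simps)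
    finally show ?thesis .
  qed auto
qed

lemma ec_mult_scale_point:
  fixes u :: "'k::field"
  assumes "u \<noteq> 0"
  shows "ec_mult (u\<^sup>2 * a2) (u ^ 4 * a4) n (scale_point u P) = scale_point u (ec_mult a2 a4 n P)"
  by (induction n) (simp_all add: ec_add_scale_point assms)

locale subfield_hom =
  fixes S :: "'k::field set" and h :: "'k \<Rightarrow> 'l::field"
  assumes one_closed: "1 \<in> S"
    and add_closed: "x \<in> S \<Longrightarrow> y \<in> S \<Longrightarrow> x + y \<in> S"
    and uminus_closed: "x \<in> S \<Longrightarrow> - x \<in> S"
    and mult_closed: "x \<in> S \<Longrightarrow> y \<in> S \<Longrightarrow> x * y \<in> S"
    and inverse_closed: "x \<in> S \<Longrightarrow> inverse x \<in> S"
    and hom_one: "h 1 = 1"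
    and hom_add: "x \<in> S \<Longrightarrow> y \<in> S \<Longrightarrow> h (x + y) = h x + h y"
    and hom_mult: "x \<in> S \<Longrightarrow> y \<in> S \<Longrightarrow> h (x * y) = h x * h y"
    and hom_eq_0_imp: "x \<in> S \<Longrightarrow> h x = 0 \<Longrightarrow> x = 0"
begin

lemma zero_closed: "0 \<in> S"
  using add_closed[OF one_closed uminus_closed[OF one_closed]] by simp

lemma diff_closed: "x \<in> S \<Longrightarrow> y \<in> S \<Longrightarrow> x - y \<in> S"
  using add_closed[of x "- y"] uminus_closed[of y] by simp

lemma divide_closed: "x \<in> S \<Longrightarrow> y \<in> S \<Longrightarrow> x / y \<in> S"
  by (simp add: divide_inverse mult_closed inverse_closed)

lemma power_closed: "x \<in> S \<Longrightarrow> x ^ n \<in> S"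
  by (induction n) (simp_all add: one_closed mult_closed)

lemma of_nat_closed: "of_nat n \<in> S"
  by (induction n) (simp_all add: zero_closed one_closed add_closed)

lemma numeral_closed: "numeral k \<in> S"
  using of_nat_closed[of "numeral k"] by simp

lemma hom_zero: "h 0 = 0"
proof -
  have "h 0 + h 0 = h 0 + 0"
    using hom_add[OF zero_closed zero_closed] by simp
  then show ?thesis
    by (rule add_left_imp_eq)
qed

lemma hom_uminus: "x \<in> S \<Longrightarrow> h (- x) = - h x"
  using hom_add[of x "- x"] uminus_closed[of x] by (simp add: hom_zero add_eq_0_iff)

lemma hom_diff: "x \<in> S \<Longrightarrow> y \<in> S \<Longrightarrow> h (x - y) = h x - h y"
  using hom_add[of x "- y"] uminus_closed[of y] by (simp add: hom_uminus)

lemma hom_inverse: "x \<in> S \<Longrightarrow> h (inverse x) = inverse (h x)"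
proof (cases "x = 0")
  case False
  assume "x \<in> S"
  then have "h x * h (inverse x) = 1"
    using hom_mult[of x "inverse x"] inverse_closed False by (simp add: hom_one)
  then show ?thesis
    by (simp add: inverse_unique)
qed (simp add: hom_zero)

lemma hom_divide: "x \<in> S \<Longrightarrow> y \<in> S \<Longrightarrow> h (x / y) = h x / h y"
  by (simp add: divide_inverse hom_mult inverse_closed hom_inverse)

lemma hom_power: "x \<in> S \<Longrightarrow> h (x ^ n) = h x ^ n"
  by (induction n) (simp_all add: hom_one hom_mult power_closed)

lemma hom_of_nat: "h (of_nat n) = of_nat n"
  by (induction n) (simp_all add: hom_zero hom_one hom_add of_nat_closed one_closed)

lemma hom_numeral: "h (numeral k) = numeral k"
  using hom_of_nat[of "numeral k"] by simp

lemma hom_eq_iff: "x \<in> S \<Longrightarrow> y \<in> S \<Longrightarrow> h x = h y \<longleftrightarrow> x = y"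
  using hom_eq_0_imp[OF diff_closed, of x y] by (auto simp: hom_diff)

lemmas closed = one_closed zero_closed add_closed uminus_closed diff_closed mult_closed
  divide_closed power_closed numeral_closed

lemmas hom = hom_one hom_zero hom_add hom_uminus hom_diff hom_mult hom_divide hom_power hom_numeral

definition map_point :: "'k ec_point \<Rightarrow> 'l ec_point" where
  "map_point = map_option (\<lambda>(x, y). (h x, h y))"

definition point_in :: "'k ec_point \<Rightarrow> bool" where
  "point_in P \<longleftrightarrow> (\<forall>x y. P = Some (x, y) \<longrightarrow> x \<in> S \<and> y \<in> S)"

lemma map_point_simps [simp]: "map_point None = None" "map_point (Some (x, y)) = Some (h x, h y)"
  by (simp_all add: map_point_def)

lemma point_in_simps [simp]: "point_in None" "point_in (Some (x, y)) \<longleftrightarrow> x \<in> S \<and> y \<in> S"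
  by (simp_all add: point_in_def)

lemma ec_slope_closed_hom:
  assumes "a2 \<in> S" "a4 \<in> S" "x1 \<in> S" "y1 \<in> S" "x2 \<in> S" "y2 \<in> S"
  shows "ec_slope a2 a4 x1 y1 x2 y2 \<in> S"
    "h (ec_slope a2 a4 x1 y1 x2 y2) = ec_slope (h a2) (h a4) (h x1) (h y1) (h x2) (h y2)"
  using assms by (simp_all add: ec_slope_def closed hom hom_eq_iff)

lemma ec_add_hom:
  assumes "a2 \<in> S" "a4 \<in> S" "point_in P" "point_in R"
  shows "point_in (ec_add a2 a4 P R)"
    "ec_add (h a2) (h a4) (map_point P) (map_point R) = map_point (ec_add a2 a4 P R)"
proof -
  have "point_in (ec_add a2 a4 P R) \<and>
    ec_add (h a2) (h a4) (map_point P) (map_point R) = map_point (ec_add a2 a4 P R)"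
  proof (cases P; cases R)
    fix p r
    assume P: "P = Some p" and R: "R = Some r"
    obtain x1 y1 x2 y2 where p: "p = (x1, y1)" and r: "r = (x2, y2)"
      by fastforce
    have S: "x1 \<in> S" "y1 \<in> S" "x2 \<in> S" "y2 \<in> S"
      using assms(3,4) by (simp_all add: P R p r)
    have "h y1 + h y2 = 0 \<longleftrightarrow> y1 + y2 = 0"
      using hom_eq_iff[of "y1 + y2" 0] S by (simp add: closed hom)
    then show ?thesis
      using assms(1,2) S
      by (simp add: P R p r ec_add_Some_Some Let_def ec_slope_closed_hom closed hom hom_eq_iff)
  qed (use assms in auto)
  then show "point_in (ec_add a2 a4 P R)"
    "ec_add (h a2) (h a4) (map_point P) (map_point R) = map_point (ec_add a2 a4 P R)"
    by simp_all
qed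

lemma ec_mult_hom:
  assumes "a2 \<in> S" "a4 \<in> S" "point_in P"
  shows "ec_mult (h a2) (h a4) n (map_point P) = map_point (ec_mult a2 a4 n P)"
proof -
  have "point_in (ec_mult a2 a4 n P) \<and>
    ec_mult (h a2) (h a4) n (map_point P) = map_point (ec_mult a2 a4 n P)"
    by (induction n) (simp_all add: ec_add_hom assms)
  then show ?thesis ..
qed

lemma ec_infinite_order_map_point:
  assumes "a2 \<in> S" "a4 \<in> S" "point_in P" "ec_infinite_order a2 a4 P"
  shows "ec_infinite_order (h a2) (h a4) (map_point P)"
  using assms(4) ec_mult_hom[OF assms(1-3)] unfolding ec_infinite_order_def
  by (metis map_point_def option.map_disc_iff)

end

lemma scale_point_infinite_order:
  fixes u :: "'k::field"
  assumes "u \<noteq> 0" "ec_infinite_order (u\<^sup>2 * a2) (u ^ 4 * a4) (scale_point u P)"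
  shows "ec_infinite_order a2 a4 P"
  using assms unfolding ec_infinite_order_def
  by (metis ec_mult_scale_point scale_point_simps(1))

section \<open>Multiples of Q = (-W^2, W) on Y^2 = X^3 + W^2 X^2 - X\<close>

definition W :: "'a::field poly fract" where
  "W = Fract [:0, 1:] 1"

lemma W_eq_to_fract: "W = to_fract [:0, 1:]"
  by (simp add: W_def to_fract_def)

lemma W_nonzero [simp]: "W \<noteq> 0"
  by (simp add: W_eq_to_fract)

lemma fract_order_W [simp]: "fract_order 0 W = 1"
  using order_power_n_n[of 0 1] by (simp add: W_def fract_order_Fract)

lemma fract_order_inf_W [simp]: "fract_order_inf W = -1"
  by (simp add: W_def fract_order_inf_Fract)

lemma fract_order_W_power [simp]: "fract_order 0 (W ^ n) = int n" "fract_order_inf (W ^ n) = - int n"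
  by (simp_all add: ord0.val_power ord_inf.val_power)

text \<open>For P = (X, Y) and Q = (-w^2, w), the chords through P and \<plusminus>Q have slopes
  (Y \<mp> w) / (X + w^2), so that x(P \<plusminus> Q) = ((Y \<mp> w) / (X + w^2))^2 - X.\<close>

context
  fixes w X Y :: "'k::field"
  assumes curve: "on_curve (w\<^sup>2) (-1) (Some (X, Y))"
    and pole: "X + w\<^sup>2 \<noteq> 0"
begin

lemma chord_factor: "(Y - w) * (Y + w) = (X + w\<^sup>2) * (X\<^sup>2 - 1)"
proof -
  have "(Y - w) * (Y + w) = Y\<^sup>2 - w\<^sup>2"
    by (simp add: algebra_simps power2_eq_square)
  also have "\<dots> = (X + w\<^sup>2) * (X\<^sup>2 - 1)"
    using curve by (simp add: on_curve_def algebra_simps power2_eq_square power3_eq_cube)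
  finally show ?thesis .
qed

lemma chord_slope_product:
  "(Y - w) / (X + w\<^sup>2) * ((Y + w) / (X + w\<^sup>2)) = (X\<^sup>2 - 1) / (X + w\<^sup>2)"
  using chord_factor pole by (simp add: power2_eq_square)

lemma chord_slope_eq: "Y + w \<noteq> 0 \<Longrightarrow> (Y - w) / (X + w\<^sup>2) = (X\<^sup>2 - 1) / (Y + w)"
  using chord_factor pole by (simp add: field_simps)

lemma chord_x_eq:
  assumes "s\<^sup>2 = w\<^sup>2"
  shows "((Y - s) / (X + w\<^sup>2))\<^sup>2 - X =
    (w\<^sup>2 - (1 + w ^ 4) * X - 2 * s * Y - w\<^sup>2 * X\<^sup>2) / (X + w\<^sup>2)\<^sup>2"
proof -
  have "(Y - s)\<^sup>2 - X * (X + w\<^sup>2)\<^sup>2 = Y\<^sup>2 + s\<^sup>2 - 2 * s * Y - X * (X + w\<^sup>2)\<^sup>2"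
    by (simp add: power2_eq_square algebra_simps)
  also have "\<dots> = (X ^ 3 + w\<^sup>2 * X\<^sup>2 - X) + w\<^sup>2 - 2 * s * Y - X * (X + w\<^sup>2)\<^sup>2"
    using curve assms by (simp add: on_curve_def)
  also have "\<dots> = w\<^sup>2 - (1 + w ^ 4) * X - 2 * s * Y - w\<^sup>2 * X\<^sup>2"
    by (simp add: power2_eq_square power3_eq_cube power4_eq_xxxx algebra_simps)
  finally show ?thesis
    using pole by (simp add: field_simps)
qed

lemma chord_x_sum:
  shows "(((Y - w) / (X + w\<^sup>2))\<^sup>2 - X) + (((Y + w) / (X + w\<^sup>2))\<^sup>2 - X) =
    (- 2 * w\<^sup>2 * X\<^sup>2 - 2 * (1 + w ^ 4) * X + 2 * w\<^sup>2) / (X + w\<^sup>2)\<^sup>2"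
proof -
  have "(- w)\<^sup>2 = w\<^sup>2"
    by simp
  note x_minus = chord_x_eq[OF refl] and x_plus = chord_x_eq[OF this]
  have "(((Y - w) / (X + w\<^sup>2))\<^sup>2 - X) + (((Y - (- w)) / (X + w\<^sup>2))\<^sup>2 - X) =
    ((w\<^sup>2 - (1 + w ^ 4) * X - 2 * w * Y - w\<^sup>2 * X\<^sup>2) + (w\<^sup>2 - (1 + w ^ 4) * X - 2 * (- w) * Y - w\<^sup>2 * X\<^sup>2))
      / (X + w\<^sup>2)\<^sup>2"
    unfolding x_minus x_plus by (rule add_divide_distrib[symmetric])
  also have "(w\<^sup>2 - (1 + w ^ 4) * X - 2 * w * Y - w\<^sup>2 * X\<^sup>2) + (w\<^sup>2 - (1 + w ^ 4) * X - 2 * (- w) * Y - w\<^sup>2 * X\<^sup>2)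
    = - 2 * w\<^sup>2 * X\<^sup>2 - 2 * (1 + w ^ 4) * X + 2 * w\<^sup>2"
    by (simp add: algebra_simps)
  finally show ?thesis
    unfolding diff_minus_eq_add .
qed

end

text \<open>x(nQ) is of pole type for even n and of zero type for odd n.\<close>

definition pole_type :: "'a::field poly fract \<Rightarrow> bool" where
  "pole_type X \<longleftrightarrow> X \<noteq> 0 \<and> fract_order 0 X < 0 \<and> fract_order_inf X \<le> -3"

definition zero_type :: "'a::field poly fract \<Rightarrow> bool" where
  "zero_type X \<longleftrightarrow> X \<noteq> 0 \<and> 0 < fract_order 0 X \<and> ord_inf.val_ge (-1) (X + W\<^sup>2)"

lemma pole_type_orders:
  fixes X Y :: "'a::field poly fract"
  assumes curve: "on_curve (W\<^sup>2) (-1) (Some (X, Y))" and "pole_type X"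
  shows "X + W\<^sup>2 \<noteq> 0" "fract_order 0 (X + W\<^sup>2) = fract_order 0 X"
    "fract_order_inf (X + W\<^sup>2) = fract_order_inf X"
    "Y \<noteq> 0" "2 * fract_order 0 Y = 3 * fract_order 0 X" "2 * fract_order_inf Y = 3 * fract_order_inf X"
proof -
  have X: "X \<noteq> 0" "fract_order 0 X < 0" "fract_order_inf X \<le> -3"
    using \<open>pole_type X\<close> by (simp_all add: pole_type_def)
  show "X + W\<^sup>2 \<noteq> 0" "fract_order 0 (X + W\<^sup>2) = fract_order 0 X"
    using ord0.val_add_dominant[OF X(1)] X(2) by (simp_all add: ord0.val_geI)
  show "fract_order_inf (X + W\<^sup>2) = fract_order_inf X"
    using ord_inf.val_add_dominant[OF X(1)] X(3) by (simp add: ord_inf.val_geI)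
  have Y2: "Y\<^sup>2 = X ^ 3 + (W\<^sup>2 * X\<^sup>2 - X)"
    using curve by (simp add: on_curve_def)
  have X3: "X ^ 3 \<noteq> 0"
    using X(1) by simp
  have "ord0.val_ge (fract_order 0 (X ^ 3) + 1) (W\<^sup>2 * X\<^sup>2 - X)"
    using X by (intro ord0.val_ge_diff ord0.val_geI) (simp_all add: ord0.val_power ord0.val_mult)
  from ord0.val_add_dominant[OF X3 this] have "Y \<noteq> 0" "fract_order 0 (Y\<^sup>2) = fract_order 0 (X ^ 3)"
    by (simp_all flip: Y2)
  then show "Y \<noteq> 0" "2 * fract_order 0 Y = 3 * fract_order 0 X"
    using X(1) by (simp_all add: ord0.val_power)
  have "ord_inf.val_ge (fract_order_inf (X ^ 3) + 1) (W\<^sup>2 * X\<^sup>2 - X)"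
    using X by (intro ord_inf.val_ge_diff ord_inf.val_geI)
      (simp_all add: ord_inf.val_power ord_inf.val_mult)
  from ord_inf.val_add_dominant[OF X3 this] have "fract_order_inf (Y\<^sup>2) = fract_order_inf (X ^ 3)"
    by (simp flip: Y2)
  with X(1) \<open>Y \<noteq> 0\<close> show "2 * fract_order_inf Y = 3 * fract_order_inf X"
    by (simp add: ord_inf.val_power)
qed

lemma pole_type_next_order_0:
  fixes X Y :: "'a::field poly fract"
  assumes two: "(2::'a) \<noteq> 0" and curve: "on_curve (W\<^sup>2) (-1) (Some (X, Y))" and "pole_type X"
  shows "ord0.val_ge 1 (((Y - W) / (X + W\<^sup>2))\<^sup>2 - X)"
proof -
  note orders = pole_type_orders[OF curve \<open>pole_type X\<close>]
  have X: "X \<noteq> 0" "fract_order 0 X < 0"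
    using \<open>pole_type X\<close> by (simp_all add: pole_type_def)
  let ?c = "1 + 2 * fract_order 0 X"
  have "ord0.val_ge ?c (W\<^sup>2)" "ord0.val_ge ?c (W\<^sup>2 * X\<^sup>2)"
    using X by (simp_all add: ord0.val_geI ord0.val_mult ord0.val_power)
  moreover have "ord0.val_ge ?c ((1 + W ^ 4) * X)"
  proof -
    have "ord0.val_ge 0 (1 + W ^ 4)"
      by (intro ord0.val_ge_add ord0.val_geI) simp_all
    from ord0.val_ge_mult[OF this ord0.val_ge_self[of X]] X show ?thesis
      by (elim ord0.val_ge_mono) simp
  qed
  moreover have "ord0.val_ge ?c (2 * W * Y)"
    using orders(4,5) X fract_order_numeral[OF two] two_poly_fract_nonzero[OF two]
    by (intro ord0.val_geI) (simp add: ord0.val_mult)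
  ultimately have "ord0.val_ge ?c (W\<^sup>2 - (1 + W ^ 4) * X - 2 * W * Y - W\<^sup>2 * X\<^sup>2)"
    by (intro ord0.val_ge_diff)
  from ord0.val_ge_divide[OF this, of "(X + W\<^sup>2)\<^sup>2"] show ?thesis
    using orders(1,2) chord_x_eq[OF curve orders(1), of W] by (simp add: ord0.val_power)
qed

lemma pole_type_next_order_inf:
  fixes X Y :: "'a::field poly fract"
  assumes two: "(2::'a) \<noteq> 0" and curve: "on_curve (W\<^sup>2) (-1) (Some (X, Y))" and "pole_type X"
  shows "ord_inf.val_ge (-1) (((Y - W) / (X + W\<^sup>2))\<^sup>2 - X + W\<^sup>2)"
proof -
  note orders = pole_type_orders[OF curve \<open>pole_type X\<close>]
  have X: "X \<noteq> 0" "fract_order_inf X \<le> -3"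
    using \<open>pole_type X\<close> by (simp_all add: pole_type_def)
  have "((Y - W) / (X + W\<^sup>2))\<^sup>2 - X + W\<^sup>2 =
    (W\<^sup>2 - (1 + W ^ 4) * X - 2 * W * Y - W\<^sup>2 * X\<^sup>2 + W\<^sup>2 * (X + W\<^sup>2)\<^sup>2) / (X + W\<^sup>2)\<^sup>2"
    using chord_x_eq[OF curve orders(1), of W] orders(1) by (simp add: divide_add_eq_iff)
  also have "W\<^sup>2 - (1 + W ^ 4) * X - 2 * W * Y - W\<^sup>2 * X\<^sup>2 + W\<^sup>2 * (X + W\<^sup>2)\<^sup>2 =
    W\<^sup>2 - X + W ^ 4 * X - 2 * W * Y + W ^ 6"
    by (simp add: power2_eq_square algebra_simps eval_nat_numeral)
  finally have eq: "((Y - W) / (X + W\<^sup>2))\<^sup>2 - X + W\<^sup>2 =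
    (W\<^sup>2 - X + W ^ 4 * X - 2 * W * Y + W ^ 6) / (X + W\<^sup>2)\<^sup>2" .
  let ?c = "2 * fract_order_inf X - 1"
  have "ord_inf.val_ge ?c (W\<^sup>2)" "ord_inf.val_ge ?c X" "ord_inf.val_ge ?c (W ^ 4 * X)"
    "ord_inf.val_ge ?c (W ^ 6)"
    using X by (simp_all add: ord_inf.val_geI ord_inf.val_mult)
  moreover have "ord_inf.val_ge ?c (2 * W * Y)"
    using orders(4,6) X fract_order_numeral[OF two] two_poly_fract_nonzero[OF two]
    by (intro ord_inf.val_geI) (simp add: ord_inf.val_mult)
  ultimately have "ord_inf.val_ge ?c (W\<^sup>2 - X + W ^ 4 * X - 2 * W * Y + W ^ 6)"
    by (intro ord_inf.val_ge_add ord_inf.val_ge_diff)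
  from ord_inf.val_ge_divide[OF this, of "(X + W\<^sup>2)\<^sup>2"] show ?thesis
    using orders(1,3) by (simp add: eq ord_inf.val_power)
qed

lemma pole_type_next:
  fixes X Y :: "'a::field poly fract"
  assumes two: "(2::'a) \<noteq> 0" and curve: "on_curve (W\<^sup>2) (-1) (Some (X, Y))" and "pole_type X"
  shows "zero_type (((Y - W) / (X + W\<^sup>2))\<^sup>2 - X)"
proof -
  have "((Y - W) / (X + W\<^sup>2))\<^sup>2 - X \<noteq> 0"
  proof
    assume "((Y - W) / (X + W\<^sup>2))\<^sup>2 - X = 0"
    with pole_type_next_order_inf[OF assms] have "ord_inf.val_ge (-1) (W\<^sup>2 :: 'a poly fract)"
      by simp
    then show False
      by (simp add: ord_inf.val_ge_def)
  qed
  with pole_type_next_order_0[OF assms] pole_type_next_order_inf[OF assms] show ?thesis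
    by (simp add: zero_type_def ord0.val_ge_def)
qed

lemma zero_type_orders:
  fixes X :: "'a::field poly fract"
  assumes "zero_type X"
  shows "X \<noteq> 0" "0 < fract_order 0 X" "fract_order_inf X = -2"
    "X\<^sup>2 - 1 \<noteq> 0" "fract_order 0 (X\<^sup>2 - 1) = 0" "fract_order_inf (X\<^sup>2 - 1) = -4"
proof -
  show X: "X \<noteq> 0" "0 < fract_order 0 X"
    using assms by (simp_all add: zero_type_def)
  have "ord_inf.val_ge (fract_order_inf (- W\<^sup>2) + 1) (X + W\<^sup>2)"
    using assms by (simp add: zero_type_def)
  from ord_inf.val_add_dominant(2)[OF _ this] show X_inf: "fract_order_inf X = -2"
    by simp
  have "ord0.val_ge (fract_order 0 (-1) + 1) (X\<^sup>2)"
    using X by (intro ord0.val_geI) (simp add: ord0.val_power)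
  from ord0.val_add_dominant[OF _ this] show "X\<^sup>2 - 1 \<noteq> 0" "fract_order 0 (X\<^sup>2 - 1) = 0"
    by simp_all
  have "ord_inf.val_ge (fract_order_inf (X\<^sup>2) + 1) 1"
    using X X_inf by (intro ord_inf.val_geI) (simp add: ord_inf.val_power)
  from ord_inf.val_diff_dominant(2)[OF _ this] show "fract_order_inf (X\<^sup>2 - 1) = -4"
    using X X_inf by (simp add: ord_inf.val_power)
qed

lemma zero_type_orders_Y:
  fixes X Y :: "'a::field poly fract"
  assumes curve: "on_curve (W\<^sup>2) (-1) (Some (X, Y))" and "zero_type X"
  shows "ord0.val_ge 1 Y" "ord_inf.val_ge (-2) Y"
proof -
  note X = zero_type_orders[OF \<open>zero_type X\<close>]
  define F where "F = X * (X + W\<^sup>2) - 1"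
  have Y2: "Y\<^sup>2 = X * F"
    using curve by (simp add: on_curve_def F_def power2_eq_square power3_eq_cube algebra_simps)
  have "ord0.val_ge 1 (X + W\<^sup>2)"
    using X by (intro ord0.val_ge_add ord0.val_geI) simp_all
  from ord0.val_ge_mult[OF ord0.val_geI[of 1 X] this] X
  have "ord0.val_ge (fract_order 0 (-1) + 1) (X * (X + W\<^sup>2))"
    by (simp add: ord0.val_ge_mono)
  from ord0.val_add_dominant[OF _ this] have F: "F \<noteq> 0" "fract_order 0 F = 0"
    by (simp_all add: F_def)
  show "ord0.val_ge 1 Y"
  proof (cases "Y = 0")
    case False
    have "fract_order 0 (Y\<^sup>2) = fract_order 0 (X * F)"
      by (simp add: Y2)
    with X F False have "2 * fract_order 0 Y = fract_order 0 X"
      by (simp add: ord0.val_power ord0.val_mult)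
    with X show ?thesis
      by (intro ord0.val_geI) linarith
  qed simp
  have "ord_inf.val_ge (-2 + (-1)) (X * (X + W\<^sup>2))"
    using X assms(2) by (intro ord_inf.val_ge_mult) (simp_all add: zero_type_def ord_inf.val_geI)
  then have "ord_inf.val_ge (-3) F"
    unfolding F_def by (intro ord_inf.val_ge_diff) (simp_all add: ord_inf.val_geI)
  then have Y2_inf: "ord_inf.val_ge (-2 + (-3)) (Y\<^sup>2)"
    using X unfolding Y2 by (intro ord_inf.val_ge_mult) (simp_all add: ord_inf.val_geI)
  show "ord_inf.val_ge (-2) Y"
  proof (cases "Y = 0")
    case False
    with Y2_inf have "-5 \<le> 2 * fract_order_inf Y"
      by (simp add: ord_inf.val_ge_def ord_inf.val_power)
    then show ?thesis
      by (intro ord_inf.val_geI) linarith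
  qed simp
qed

lemma zero_type_slope_orders:
  fixes X Y :: "'a::field poly fract"
  assumes curve: "on_curve (W\<^sup>2) (-1) (Some (X, Y))" and "zero_type X" and pole: "X + W\<^sup>2 \<noteq> 0"
  shows "(Y - W) / (X + W\<^sup>2) \<noteq> 0" "fract_order 0 ((Y - W) / (X + W\<^sup>2)) \<le> -1"
    "fract_order_inf ((Y - W) / (X + W\<^sup>2)) \<le> -2"
proof -
  note X = zero_type_orders[OF \<open>zero_type X\<close>] and Y = zero_type_orders_Y[OF curve \<open>zero_type X\<close>]
  have "Y + W \<noteq> 0"
  proof
    assume "Y + W = 0"
    with chord_factor[OF curve pole] have "(X + W\<^sup>2) * (X\<^sup>2 - 1) = 0"
      by simp
    with pole X(4) show False
      by simp
  qed
  have "ord0.val_ge 1 (Y + W)" "ord_inf.val_ge (-2) (Y + W)"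
    using Y by (simp_all add: ord0.val_ge_add ord_inf.val_ge_add ord0.val_geI ord_inf.val_geI)
  with \<open>Y + W \<noteq> 0\<close> have YW: "1 \<le> fract_order 0 (Y + W)" "-2 \<le> fract_order_inf (Y + W)"
    by (simp_all add: ord0.val_ge_def ord_inf.val_ge_def)
  have "(Y - W) / (X + W\<^sup>2) = (X\<^sup>2 - 1) / (Y + W)"
    using chord_slope_eq[OF curve pole \<open>Y + W \<noteq> 0\<close>] .
  with X YW \<open>Y + W \<noteq> 0\<close>
  show "(Y - W) / (X + W\<^sup>2) \<noteq> 0" "fract_order 0 ((Y - W) / (X + W\<^sup>2)) \<le> -1"
    "fract_order_inf ((Y - W) / (X + W\<^sup>2)) \<le> -2"
    by (simp_all add: ord0.val_divide ord_inf.val_divide)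
qed

lemma zero_type_next:
  fixes X Y :: "'a::field poly fract"
  assumes curve: "on_curve (W\<^sup>2) (-1) (Some (X, Y))" and "zero_type X" and pole: "X + W\<^sup>2 \<noteq> 0"
  shows "pole_type (((Y - W) / (X + W\<^sup>2))\<^sup>2 - X)"
proof -
  note L = zero_type_slope_orders[OF assms] and X = zero_type_orders[OF \<open>zero_type X\<close>]
  have "ord0.val_ge (2 * fract_order 0 ((Y - W) / (X + W\<^sup>2)) + 1) X"
    using L X by (intro ord0.val_geI) simp
  note at_0 = ord0.val_square_diff[OF L(1) this]
  have "ord_inf.val_ge (2 * fract_order_inf ((Y - W) / (X + W\<^sup>2)) + 1) X"
    using L X by (intro ord_inf.val_geI) simp
  note at_inf = ord_inf.val_square_diff[OF L(1) this]
  show ?thesis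
    using at_0 at_inf L by (simp add: pole_type_def)
qed

lemma denominator_order_bound:
  fixes X l :: "'a::field poly fract" and A B :: "'a poly"
  assumes "0 < fract_order 0 X" "l \<noteq> 0" and rep: "l\<^sup>2 - X = Fract A B" "B \<noteq> 0" "coprime A B"
  shows "- 2 * fract_order 0 l \<le> int (order 0 B)"
proof (cases "fract_order 0 l < 0")
  case True
  with assms(1) have "ord0.val_ge (2 * fract_order 0 l + 1) X"
    by (intro ord0.val_geI) simp
  from ord0.val_square_diff[OF assms(2) this]
  have "A \<noteq> 0" "fract_order 0 (Fract A B) = 2 * fract_order 0 l"
    by (auto simp: rep fract_collapse)
  with order_denominator[OF rep(2,3), of 0] show ?thesis
    by simp
qed simp

lemma height_denominator_bound:
  fixes X l :: "'a::field poly fract" and A B :: "'a poly"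
  assumes "fract_order_inf X = -2" "l \<noteq> 0" and rep: "l\<^sup>2 - X = Fract A B" "B \<noteq> 0" "coprime A B"
  shows "int (degree B) - 2 * fract_order_inf l - 2 \<le> int (naive_height (l\<^sup>2 - X))"
proof (cases "fract_order_inf l \<le> -2")
  case True
  with assms(1) have "ord_inf.val_ge (2 * fract_order_inf l + 1) X"
    by (intro ord_inf.val_geI) simp
  from ord_inf.val_square_diff[OF assms(2) this]
  have "A \<noteq> 0" "fract_order_inf (Fract A B) = 2 * fract_order_inf l"
    by (auto simp: rep fract_collapse)
  with naive_height_denominator[OF rep(2,3)] show ?thesis
    by (simp add: rep)
next
  case False
  then show ?thesis
    by (simp add: rep naive_height_Fract)
qed

text \<open>N is the numerator of x(P + Q) + x(P - Q) for x(P) = A/B, written in the variable X = W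
  (see chord_x_sum_Fract). Since N = -2 (X^2 A + B) M + 4 X^2 B^2 with M = A + X^2 B, the part
  of M prime to X is prime to N.\<close>
lemma coprime_chord_numerator:
  fixes A B M' :: "'a::field poly"
  assumes two: "(2::'a) \<noteq> 0" and "coprime A B" "M' dvd A + [:0, 1:]\<^sup>2 * B" "coprime M' [:0, 1:]"
  shows "coprime M' (- 2 * [:0, 1:]\<^sup>2 * A\<^sup>2 - 2 * (1 + [:0, 1:] ^ 4) * A * B + 2 * [:0, 1:]\<^sup>2 * B\<^sup>2)"
proof -
  let ?x = "[:0, 1:] :: 'a poly"
  have "coprime M' B"
  proof (rule coprimeI)
    fix c
    assume "c dvd M'" "c dvd B"
    with assms(3) have "c dvd (A + ?x\<^sup>2 * B) - ?x\<^sup>2 * B"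
      by (meson dvd_diff dvd_mult dvd_trans)
    then have "c dvd A"
      by simp
    with \<open>coprime A B\<close> show "is_unit c"
      using \<open>c dvd B\<close> by (rule coprime_common_divisor)
  qed
  moreover have "coprime M' 4"
  proof -
    have "(2::'a) * 2 \<noteq> 0"
      using two two by (rule no_zero_divisors)
    then have "is_unit (4 :: 'a poly)"
      by (simp add: is_unit_iff_degree numeral_poly)
    then show ?thesis
      by (simp add: is_unit_right_imp_coprime)
  qed
  ultimately have c4: "coprime M' (4 * ?x\<^sup>2 * B\<^sup>2)"
    using assms(4) by (simp add: coprime_mult_right_poly coprime_power_right_poly)
  show ?thesis
  proof (rule coprimeI)
    fix c
    assume c: "c dvd M'" "c dvd - 2 * ?x\<^sup>2 * A\<^sup>2 - 2 * (1 + ?x ^ 4) * A * B + 2 * ?x\<^sup>2 * B\<^sup>2"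
    have "- 2 * ?x\<^sup>2 * A\<^sup>2 - 2 * (1 + ?x ^ 4) * A * B + 2 * ?x\<^sup>2 * B\<^sup>2 =
      (A + ?x\<^sup>2 * B) * (- 2 * (?x\<^sup>2 * A + B)) + 4 * ?x\<^sup>2 * B\<^sup>2"
      by (simp add: power2_eq_square power4_eq_xxxx algebra_simps)
    moreover have "c dvd (A + ?x\<^sup>2 * B) * (- 2 * (?x\<^sup>2 * A + B))"
      using c(1) assms(3) by (meson dvd_mult2 dvd_trans)
    ultimately have "c dvd 4 * ?x\<^sup>2 * B\<^sup>2"
      using c(2) by (metis dvd_add_right_iff)
    with c(1) c4 show "is_unit c"
      using coprime_common_divisor by blast
  qed
qed

lemma chord_denominator_bound:
  fixes A B Bp Bm C :: "'a::field poly"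
  assumes two: "(2::'a) \<noteq> 0" and "coprime A B" "Bp \<noteq> 0" "Bm \<noteq> 0"
    and M: "M = A + [:0, 1:]\<^sup>2 * B" "M \<noteq> 0"
    and N: "N = - 2 * [:0, 1:]\<^sup>2 * A\<^sup>2 - 2 * (1 + [:0, 1:] ^ 4) * A * B + 2 * [:0, 1:]\<^sup>2 * B\<^sup>2"
    and eq: "C * M\<^sup>2 = N * (Bp * Bm)"
  shows "2 * degree M + order 0 Bp + order 0 Bm \<le> degree Bp + degree Bm + 2 * order 0 M"
proof -
  let ?x = "[:0, 1:] :: 'a poly"
  obtain M' where M': "M = ?x ^ order 0 M * M'" "M' \<noteq> 0" "coprime M' ?x"
    "degree M = order 0 M + degree M'"
    using order_0_decomp[OF M(2)] by blast
  obtain Rp where Rp: "Bp = ?x ^ order 0 Bp * Rp" "Rp \<noteq> 0" "degree Bp = order 0 Bp + degree Rp"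
    using order_0_decomp[OF \<open>Bp \<noteq> 0\<close>] by blast
  obtain Rm where Rm: "Bm = ?x ^ order 0 Bm * Rm" "Rm \<noteq> 0" "degree Bm = order 0 Bm + degree Rm"
    using order_0_decomp[OF \<open>Bm \<noteq> 0\<close>] by blast
  have "M' dvd M"
    by (subst M'(1)) simp
  with M'(3) have "coprime (M'\<^sup>2) N" "coprime (M'\<^sup>2) (?x ^ (order 0 Bp + order 0 Bm))"
    using coprime_chord_numerator[OF two \<open>coprime A B\<close>, of M'] M(1) N
    by (simp_all add: coprime_power_left_poly coprime_power_right_poly)
  moreover have "M'\<^sup>2 dvd N * (?x ^ (order 0 Bp + order 0 Bm) * (Rp * Rm))"
  proof -
    have "M'\<^sup>2 dvd M\<^sup>2"
      using \<open>M' dvd M\<close> by (rule dvd_power_same)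
    also have "\<dots> dvd N * (Bp * Bm)"
      by (metis eq dvd_triv_right)
    also have "Bp * Bm = (?x ^ order 0 Bp * Rp) * (?x ^ order 0 Bm * Rm)"
      using Rp(1) Rm(1) by (rule arg_cong2[where f = times])
    finally show ?thesis
      by (simp add: power_add algebra_simps)
  qed
  ultimately have "M'\<^sup>2 dvd Rp * Rm"
    by (meson coprime_dvd_mult_poly)
  then have "2 * degree M' \<le> degree Rp + degree Rm"
    using dvd_imp_degree_le[of "M'\<^sup>2" "Rp * Rm"] M'(2) Rp(2) Rm(2)
    by (simp add: degree_mult_eq degree_power_eq)
  with M'(4) Rp(3) Rm(3) show ?thesis
    by linarith
qed

lemma chord_x_sum_Fract:
  fixes X Y :: "'a::field poly fract"
  assumes curve: "on_curve (W\<^sup>2) (-1) (Some (X, Y))" and pole: "X + W\<^sup>2 \<noteq> 0"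
    and X: "X = Fract A B" "B \<noteq> 0"
  defines "M \<equiv> A + [:0, 1:]\<^sup>2 * B"
    and "N \<equiv> - 2 * [:0, 1:]\<^sup>2 * A\<^sup>2 - 2 * (1 + [:0, 1:] ^ 4) * A * B + 2 * [:0, 1:]\<^sup>2 * B\<^sup>2"
  shows "M \<noteq> 0" "X + W\<^sup>2 = Fract M B"
    "(((Y - W) / (X + W\<^sup>2))\<^sup>2 - X) + (((Y + W) / (X + W\<^sup>2))\<^sup>2 - X) = Fract N (M\<^sup>2)"
proof -
  have B: "to_fract B \<noteq> 0"
    using X(2) by simp
  have X': "X = to_fract A / to_fract B"
    using X(1) by (simp add: Fract_conv_to_fract)
  have M_eq: "to_fract M = to_fract A + W\<^sup>2 * to_fract B"
    unfolding M_def W_eq_to_fract by (simp only: to_fract_add to_fract_mult to_fract_power)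
  have N_eq: "to_fract N = - 2 * W\<^sup>2 * (to_fract A)\<^sup>2 - 2 * (1 + W ^ 4) * to_fract A * to_fract B
      + 2 * W\<^sup>2 * (to_fract B)\<^sup>2"
    unfolding N_def W_eq_to_fract
    by (simp only: to_fract_add to_fract_diff to_fract_mult to_fract_uminus to_fract_power
        to_fract_numeral to_fract_1)
  have XW: "X + W\<^sup>2 = to_fract M / to_fract B"
    using B by (simp add: X' M_eq field_simps)
  with pole show M: "M \<noteq> 0"
    by auto
  from XW show "X + W\<^sup>2 = Fract M B"
    by (simp add: Fract_conv_to_fract)
  have num: "- 2 * W\<^sup>2 * X\<^sup>2 - 2 * (1 + W ^ 4) * X + 2 * W\<^sup>2 = to_fract N / (to_fract B)\<^sup>2"
    using B by (simp add: X' N_eq field_simps power2_eq_square)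
  have "(((Y - W) / (X + W\<^sup>2))\<^sup>2 - X) + (((Y + W) / (X + W\<^sup>2))\<^sup>2 - X) =
    (- 2 * W\<^sup>2 * X\<^sup>2 - 2 * (1 + W ^ 4) * X + 2 * W\<^sup>2) / (X + W\<^sup>2)\<^sup>2"
    by (rule chord_x_sum[OF curve pole])
  also have "\<dots> = to_fract N / to_fract (M\<^sup>2)"
    unfolding num XW using B M by (simp add: power_divide)
  finally show "(((Y - W) / (X + W\<^sup>2))\<^sup>2 - X) + (((Y + W) / (X + W\<^sup>2))\<^sup>2 - X) = Fract N (M\<^sup>2)"
    by (simp add: Fract_conv_to_fract)
qed

lemma pole_type_Fract:
  fixes A B :: "'a::field poly"
  assumes "pole_type (Fract A B)" "B \<noteq> 0" "coprime A B"
  shows "order 0 (A + [:0, 1:]\<^sup>2 * B) = 0" "degree (A + [:0, 1:]\<^sup>2 * B) = naive_height (Fract A B)"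
proof -
  have "A \<noteq> 0"
    using assms(1) by (auto simp: pole_type_def fract_collapse)
  with assms have orders: "int (order 0 A) < int (order 0 B)" "int (degree B) + 3 \<le> int (degree A)"
    by (simp_all add: pole_type_def fract_order_Fract fract_order_inf_Fract)
  with coprime_order_eq_0[OF assms(3), of 0] have "order 0 A = 0"
    by auto
  with \<open>A \<noteq> 0\<close> have "poly A 0 \<noteq> 0"
    by (simp add: order_root)
  then show "order 0 (A + [:0, 1:]\<^sup>2 * B) = 0"
    by (simp add: order_0I)
  have "degree ([:0, 1:]\<^sup>2 * B) < degree A"
    using orders assms(2) by (simp add: degree_mult_eq degree_linear_power)
  then show "degree (A + [:0, 1:]\<^sup>2 * B) = naive_height (Fract A B)"
    using orders assms(2,3) by (simp add: degree_add_eq_left naive_height_Fract)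
qed

lemma zero_type_Fract:
  fixes A B :: "'a::field poly"
  assumes "zero_type (Fract A B)" "B \<noteq> 0" "coprime A B"
  shows "order 0 B = 0" "int (naive_height (Fract A B)) = int (degree B) + 2"
proof -
  have "A \<noteq> 0"
    using assms(1) by (auto simp: zero_type_def fract_collapse)
  with assms zero_type_orders[OF assms(1)]
  have orders: "int (order 0 B) < int (order 0 A)" "int (degree B) - int (degree A) = -2"
    by (simp_all add: fract_order_Fract fract_order_inf_Fract)
  with coprime_order_eq_0[OF assms(3), of 0] show "order 0 B = 0"
    by auto
  from orders show "int (naive_height (Fract A B)) = int (degree B) + 2"
    using assms(2,3) by (simp add: naive_height_Fract)
qed

lemma chord_growth_zero_type:
  fixes X Y :: "'a::field poly fract" and A B Ap Bp Am Bm :: "'a poly"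
  assumes curve: "on_curve (W\<^sup>2) (-1) (Some (X, Y))" and pole: "X + W\<^sup>2 \<noteq> 0" and "zero_type X"
    and X: "X = Fract A B" "B \<noteq> 0" "coprime A B"
    and P: "((Y - W) / (X + W\<^sup>2))\<^sup>2 - X = Fract Ap Bp" "Bp \<noteq> 0" "coprime Ap Bp"
    and R: "((Y + W) / (X + W\<^sup>2))\<^sup>2 - X = Fract Am Bm" "Bm \<noteq> 0" "coprime Am Bm"
    and key: "2 * degree (A + [:0, 1:]\<^sup>2 * B) + order 0 Bp + order 0 Bm
      \<le> degree Bp + degree Bm + 2 * order 0 (A + [:0, 1:]\<^sup>2 * B)"
  shows "2 * naive_height X \<le>
    naive_height (((Y - W) / (X + W\<^sup>2))\<^sup>2 - X) + naive_height (((Y + W) / (X + W\<^sup>2))\<^sup>2 - X)"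
proof -
  define l m M where "l = (Y - W) / (X + W\<^sup>2)" and "m = (Y + W) / (X + W\<^sup>2)"
    and "M = A + [:0, 1:]\<^sup>2 * B"
  note XO = zero_type_orders[OF \<open>zero_type X\<close>]
  note XM = chord_x_sum_Fract(1,2)[OF curve pole X(1,2)]
  note XF = zero_type_Fract[OF \<open>zero_type X\<close>[unfolded X(1)] X(2,3)]
  have lm: "l * m = (X\<^sup>2 - 1) / (X + W\<^sup>2)"
    unfolding l_def m_def by (rule chord_slope_product[OF curve pole])
  with XO pole have "l \<noteq> 0" "m \<noteq> 0"
    by auto
  have "fract_order 0 (X + W\<^sup>2) = int (order 0 M)"
    "fract_order_inf (X + W\<^sup>2) = int (degree B) - int (degree M)"
    using XM X(2) XF(1) by (simp_all add: M_def fract_order_Fract fract_order_inf_Fract)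
  moreover have "fract_order 0 (l * m) = fract_order 0 ((X\<^sup>2 - 1) / (X + W\<^sup>2))"
    "fract_order_inf (l * m) = fract_order_inf ((X\<^sup>2 - 1) / (X + W\<^sup>2))"
    by (simp_all only: lm)
  ultimately have "fract_order 0 l + fract_order 0 m = - int (order 0 M)"
    "fract_order_inf l + fract_order_inf m = - 4 - int (degree B) + int (degree M)"
    using XO pole \<open>l \<noteq> 0\<close> \<open>m \<noteq> 0\<close>
    by (simp_all add: ord0.val_divide ord_inf.val_divide ord0.val_mult ord_inf.val_mult)
  moreover have "- 2 * fract_order 0 l \<le> int (order 0 Bp)" "- 2 * fract_order 0 m \<le> int (order 0 Bm)"
    using denominator_order_bound[OF XO(2)] \<open>l \<noteq> 0\<close> \<open>m \<noteq> 0\<close> P R by (simp_all add: l_def m_def)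
  moreover have "int (degree Bp) - 2 * fract_order_inf l - 2 \<le> int (naive_height (l\<^sup>2 - X))"
    "int (degree Bm) - 2 * fract_order_inf m - 2 \<le> int (naive_height (m\<^sup>2 - X))"
    using height_denominator_bound[OF XO(3)] \<open>l \<noteq> 0\<close> \<open>m \<noteq> 0\<close> P R by (simp_all add: l_def m_def)
  ultimately show ?thesis
    using key XF(2) unfolding l_def m_def M_def X(1) by linarith
qed

lemma chord_growth:
  fixes X Y :: "'a::field poly fract"
  assumes two: "(2::'a) \<noteq> 0" and curve: "on_curve (W\<^sup>2) (-1) (Some (X, Y))"
    and pole: "X + W\<^sup>2 \<noteq> 0" and type: "pole_type X \<or> zero_type X"
  shows "2 * naive_height X \<le>
    naive_height (((Y - W) / (X + W\<^sup>2))\<^sup>2 - X) + naive_height (((Y + W) / (X + W\<^sup>2))\<^sup>2 - X)"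
proof -
  obtain A B where X: "B \<noteq> 0" "coprime A B" "X = Fract A B"
    by (rule Fract_coprime_cases)
  obtain Ap Bp where P: "Bp \<noteq> 0" "coprime Ap Bp" "((Y - W) / (X + W\<^sup>2))\<^sup>2 - X = Fract Ap Bp"
    by (rule Fract_coprime_cases)
  obtain Am Bm where R: "Bm \<noteq> 0" "coprime Am Bm" "((Y + W) / (X + W\<^sup>2))\<^sup>2 - X = Fract Am Bm"
    by (rule Fract_coprime_cases)
  define M N where "M = A + [:0, 1:]\<^sup>2 * B"
    and "N = - 2 * [:0, 1:]\<^sup>2 * A\<^sup>2 - 2 * (1 + [:0, 1:] ^ 4) * A * B + 2 * [:0, 1:]\<^sup>2 * B\<^sup>2"
  note XM = chord_x_sum_Fract[OF curve pole X(3,1), folded M_def N_def]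
  have "Fract Ap Bp + Fract Am Bm = Fract N (M\<^sup>2)"
    using XM(3) by (simp only: P(3) R(3))
  then have "(Ap * Bm + Am * Bp) * M\<^sup>2 = N * (Bp * Bm)"
    using P(1) R(1) XM(1) by (simp add: eq_fract)
  from chord_denominator_bound[OF two X(2) P(1) R(1) M_def XM(1) N_def this]
  have key: "2 * degree M + order 0 Bp + order 0 Bm \<le> degree Bp + degree Bm + 2 * order 0 M" .
  from type show ?thesis
  proof
    assume "pole_type X"
    from pole_type_Fract[OF this[unfolded X(3)] X(1,2), folded M_def X(3)] key
    have "2 * naive_height X \<le> degree Bp + degree Bm"
      by simp
    then show ?thesis
      using P R by (simp add: naive_height_Fract)
  next
    assume "zero_type X"
    from chord_growth_zero_type[OF curve pole this X(3,1,2) P(3,1,2) R(3,1,2) key[unfolded M_def]]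
    show ?thesis .
  qed
qed

abbreviation QW :: "'a::field poly fract ec_point" where
  "QW \<equiv> Some (- (W\<^sup>2), W)"

lemma QW_on_curve: "on_curve (W\<^sup>2) (-1) QW"
  by (simp add: on_curve_def power2_eq_square power3_eq_cube)

lemma naive_height_minus_W2: "naive_height (- (W\<^sup>2) :: 'a::field poly fract) = 2"
proof -
  have "- (W\<^sup>2) = Fract (- [:0, 1:]\<^sup>2) (1 :: 'a poly)"
    by (simp add: W_eq_to_fract flip: to_fract_def)
  then show ?thesis
    by (simp add: naive_height_Fract degree_linear_power)
qed

lemma ec_add_QW:
  fixes X Y :: "'a::field poly fract"
  assumes "X + W\<^sup>2 \<noteq> 0"
  shows "\<exists>y. ec_add (W\<^sup>2) (-1) QW (Some (X, Y)) = Some (((Y - W) / (X + W\<^sup>2))\<^sup>2 - X, y)"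
    "\<exists>y. ec_add (W\<^sup>2) (-1) (Some (- (W\<^sup>2), - W)) (Some (X, Y)) =
      Some (((Y + W) / (X + W\<^sup>2))\<^sup>2 - X, y)"
proof -
  have "- (W\<^sup>2) \<noteq> X"
    using assms by (auto simp: add_eq_0_iff)
  from ec_add_chord_x[OF this, of "W\<^sup>2" "-1" W Y] ec_add_chord_x[OF this, of "W\<^sup>2" "-1" "- W" Y]
  show "\<exists>y. ec_add (W\<^sup>2) (-1) QW (Some (X, Y)) = Some (((Y - W) / (X + W\<^sup>2))\<^sup>2 - X, y)"
    "\<exists>y. ec_add (W\<^sup>2) (-1) (Some (- (W\<^sup>2), - W)) (Some (X, Y)) =
      Some (((Y + W) / (X + W\<^sup>2))\<^sup>2 - X, y)"
    by simp_all
qed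

lemma tangent_x_identity:
  fixes w :: "'k::field"
  assumes "w \<noteq> 0" "(2::'k) \<noteq> 0"
  shows "((w ^ 4 - 1) / (2 * w))\<^sup>2 + w\<^sup>2 = (w ^ 4 + 1)\<^sup>2 / (4 * w\<^sup>2)"
  using assms no_zero_divisors[OF assms(2,2)] by (simp add: field_simps power2_eq_square power4_eq_xxxx)

lemma double_QW:
  assumes "(2::'a::field) \<noteq> 0"
  shows "\<exists>Y. ec_mult (W\<^sup>2) (-1) 2 (QW :: 'a poly fract ec_point) = Some ((W ^ 4 + 1)\<^sup>2 / (4 * W\<^sup>2), Y)"
proof -
  have two: "(2::'a poly fract) \<noteq> 0"
    using two_poly_fract_nonzero[OF assms] .
  then have "W + W \<noteq> (0::'a poly fract)"
    by (metis W_nonzero mult_2 mult_eq_0_iff)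
  moreover have "ec_slope (W\<^sup>2) (-1) (- (W\<^sup>2)) W (- (W\<^sup>2)) W = (W ^ 4 - 1) / (2 * W :: 'a poly fract)"
    by (simp add: ec_slope_def power2_eq_square power4_eq_xxxx algebra_simps)
  moreover have "((W ^ 4 - 1) / (2 * W))\<^sup>2 + W\<^sup>2 = (W ^ 4 + 1)\<^sup>2 / (4 * W\<^sup>2 :: 'a poly fract)"
    using W_nonzero two by (rule tangent_x_identity)
  ultimately show ?thesis
    by (simp add: numeral_2_eq_2 ec_add_Some_Some Let_def)
qed

lemma double_QW_x:
  assumes two: "(2::'a::field) \<noteq> 0"
  shows "pole_type ((W ^ 4 + 1)\<^sup>2 / (4 * W\<^sup>2) :: 'a poly fract)"
    "naive_height ((W ^ 4 + 1)\<^sup>2 / (4 * W\<^sup>2) :: 'a poly fract) = 8"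
proof -
  let ?x = "[:0, 1:] :: 'a poly"
  define A B where "A = (?x ^ 4 + 1)\<^sup>2" and "B = 4 * ?x\<^sup>2"
  have X2: "(W ^ 4 + 1)\<^sup>2 / (4 * W\<^sup>2) = Fract A B"
    by (simp add: A_def B_def W_eq_to_fract Fract_conv_to_fract)
  have "(2::'a) * 2 \<noteq> 0"
    using two two by (rule no_zero_divisors)
  then have four: "is_unit (4 :: 'a poly)"
    by (simp add: is_unit_iff_degree numeral_poly)
  have "poly (?x ^ 4 + 1) 0 \<noteq> 0"
    by simp
  then have "coprime (?x ^ 4 + 1) ?x"
    using coprime_linear_poly[of 0 "?x ^ 4 + 1"] by (simp add: dvd_iff_poly_eq_0)
  moreover have "coprime (?x ^ 4 + 1) 4"
    using four by (simp add: is_unit_right_imp_coprime)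
  ultimately have AB: "coprime A B"
    unfolding A_def B_def
    by (simp add: coprime_power_left_poly coprime_power_right_poly coprime_mult_right_poly)
  have "degree (?x ^ 4 + 1) = 4"
    by (simp add: degree_add_eq_left degree_linear_power)
  moreover from this have "?x ^ 4 + 1 \<noteq> 0"
    by auto
  moreover have "(4 :: 'a poly) \<noteq> 0"
    using four by auto
  ultimately have deg: "degree A = 8" "degree B = 2" "A \<noteq> 0" "B \<noteq> 0"
    by (simp_all add: A_def B_def degree_power_eq degree_mult_eq degree_linear_power numeral_poly)
  have "order 0 A = 0"
    by (simp add: A_def order_0I)
  moreover have "order 0 B \<noteq> 0"
    using deg(4) order_root[of B 0] by (simp add: B_def)
  ultimately show "pole_type ((W ^ 4 + 1)\<^sup>2 / (4 * W\<^sup>2) :: 'a poly fract)"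
    "naive_height ((W ^ 4 + 1)\<^sup>2 / (4 * W\<^sup>2) :: 'a poly fract) = 8"
    using deg AB by (simp_all add: X2 pole_type_def fract_order_Fract fract_order_inf_Fract
        naive_height_Fract Fract_eq_0_iff)
qed

lemma multiple_QW_step:
  fixes X Y X' Y' :: "'a::field poly fract"
  assumes two: "(2::'a) \<noteq> 0"
    and P: "ec_mult (W\<^sup>2) (-1) (Suc n) QW = Some (X, Y)"
    and P': "ec_mult (W\<^sup>2) (-1) n QW = Some (X', Y')"
    and type: "pole_type X \<or> zero_type X" and growth: "naive_height X' + 6 \<le> naive_height X"
  shows "X + W\<^sup>2 \<noteq> 0"
    "\<exists>Y''. ec_mult (W\<^sup>2) (-1) (Suc (Suc n)) QW = Some (((Y - W) / (X + W\<^sup>2))\<^sup>2 - X, Y'')"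
    "naive_height X + 6 \<le> naive_height (((Y - W) / (X + W\<^sup>2))\<^sup>2 - X)"
proof -
  have curve: "on_curve (W\<^sup>2) (-1) (Some (X, Y))" and curve': "on_curve (W\<^sup>2) (-1) (Some (X', Y'))"
    using on_curve_ec_mult[OF two_poly_fract_nonzero[OF two] QW_on_curve] P P' by metis+
  show pole: "X + W\<^sup>2 \<noteq> 0"
  proof
    assume "X + W\<^sup>2 = 0"
    then have "X = - (W\<^sup>2)"
      by (simp add: eq_neg_iff_add_eq_0)
    with growth show False
      by (simp add: naive_height_minus_W2)
  qed
  show "\<exists>Y''. ec_mult (W\<^sup>2) (-1) (Suc (Suc n)) QW = Some (((Y - W) / (X + W\<^sup>2))\<^sup>2 - X, Y'')"
    using ec_add_QW(1)[OF pole, of Y] P by simp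
  have "ec_add (W\<^sup>2) (-1) QW (Some (X', Y')) = Some (X, Y)"
    using P P' by simp
  from ec_add_inverse_cancel[OF QW_on_curve curve' this] pole
  have "ec_add (W\<^sup>2) (-1) (Some (- (W\<^sup>2), - W)) (Some (X, Y)) = Some (X', Y')"
    by (auto simp: eq_neg_iff_add_eq_0)
  with ec_add_QW(2)[OF pole, of Y] have "X' = ((Y + W) / (X + W\<^sup>2))\<^sup>2 - X"
    by auto
  with chord_growth[OF two curve pole type] growth
  show "naive_height X + 6 \<le> naive_height (((Y - W) / (X + W\<^sup>2))\<^sup>2 - X)"
    by simp
qed

lemma multiples_QW:
  assumes two: "(2::'a::field) \<noteq> 0" and "1 \<le> n"
  shows "\<exists>X Y X' Y'. ec_mult (W\<^sup>2) (-1) (Suc n) (QW :: 'a poly fract ec_point) = Some (X, Y) \<and>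
    ec_mult (W\<^sup>2) (-1) n (QW :: 'a poly fract ec_point) = Some (X', Y') \<and>
    (if odd n then pole_type X else zero_type X) \<and> naive_height X' + 6 \<le> naive_height X"
  using \<open>1 \<le> n\<close>
proof (induction n rule: dec_induct)
  case base
  have "ec_mult (W\<^sup>2) (-1) (Suc 1) QW = ec_mult (W\<^sup>2) (-1) 2 (QW :: 'a poly fract ec_point)"
    by (simp only: Suc_1)
  with double_QW[OF two] double_QW_x[OF two] show ?case
    by (auto simp: naive_height_minus_W2)
next
  case (step n)
  then obtain X Y X' Y' :: "'a poly fract"
    where P: "ec_mult (W\<^sup>2) (-1) (Suc n) QW = Some (X, Y)"
    and P': "ec_mult (W\<^sup>2) (-1) n QW = Some (X', Y')"
    and type: "if odd n then pole_type X else zero_type X"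
    and growth: "naive_height X' + 6 \<le> naive_height X"
    by blast
  then have "pole_type X \<or> zero_type X"
    by (auto split: if_splits)
  note succ = multiple_QW_step[OF two P P' this growth]
  have curve: "on_curve (W\<^sup>2) (-1) (Some (X, Y))"
    using on_curve_ec_mult[OF two_poly_fract_nonzero[OF two] QW_on_curve] P by metis
  have "if odd (Suc n) then pole_type (((Y - W) / (X + W\<^sup>2))\<^sup>2 - X)
    else zero_type (((Y - W) / (X + W\<^sup>2))\<^sup>2 - X)"
    using type pole_type_next[OF two curve] zero_type_next[OF curve _ succ(1)] by auto
  with P succ(2,3) show ?case
    by auto
qed

theorem QW_infinite_order:
  assumes "(2::'a::field) \<noteq> 0"
  shows "ec_infinite_order (W\<^sup>2) (-1) (QW :: 'a poly fract ec_point)"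
  unfolding ec_infinite_order_def
proof (intro allI impI)
  fix n :: nat
  assume "0 < n"
  show "ec_mult (W\<^sup>2) (-1) n (QW :: 'a poly fract ec_point) \<noteq> None"
  proof (cases "n = 1")
    case False
    with \<open>0 < n\<close> obtain m where "n = Suc m" "1 \<le> m"
      by (cases n) auto
    with multiples_QW[OF assms, of m] show ?thesis
      by (auto simp del: ec_mult.simps)
  qed simp
qed

text \<open>The scaling by u = W^3 carries E_T, T = W^(-4), to the curve of Q.\<close>

lemma inverse_W4_infinite_order:
  assumes "(2::'a::field) \<noteq> 0"
  defines "T \<equiv> inverse (W ^ 4) :: 'a poly fract"
  shows "ec_infinite_order T (- (T ^ 3)) (Some (- T, T\<^sup>2))"
proof (rule scale_point_infinite_order)
  show "W ^ 3 \<noteq> (0 :: 'a poly fract)"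
    by simp
  have "(W ^ 3)\<^sup>2 * T = W\<^sup>2" "(W ^ 3) ^ 4 * - (T ^ 3) = -1"
    "scale_point (W ^ 3) (Some (- T, T\<^sup>2)) = QW"
    by (simp_all add: T_def field_simps eval_nat_numeral)
  with QW_infinite_order[OF assms(1)]
  show "ec_infinite_order ((W ^ 3)\<^sup>2 * T) ((W ^ 3) ^ 4 * - (T ^ 3)) (scale_point (W ^ 3) (Some (- T, T\<^sup>2)))"
    by simp
qed

section \<open>Specialisation\<close>

definition int_polys :: "'a::field poly set" where
  "int_polys = {q. \<forall>i. coeff q i \<in> \<int>}"

lemma int_polys_closed:
  "0 \<in> int_polys" "1 \<in> int_polys" "[:0, 1:] \<in> int_polys"
  "p \<in> int_polys \<Longrightarrow> q \<in> int_polys \<Longrightarrow> p + q \<in> int_polys"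
  "p \<in> int_polys \<Longrightarrow> - p \<in> int_polys"
  "p \<in> int_polys \<Longrightarrow> q \<in> int_polys \<Longrightarrow> p * q \<in> int_polys"
  "p \<in> int_polys \<Longrightarrow> reflect_poly p \<in> int_polys"
  by (auto simp: int_polys_def coeff_1 coeff_pCons coeff_mult coeff_reflect_poly
      split: nat.split intro!: Ints_sum Ints_mult)

abbreviation compose_X4 :: "'a::comm_semiring_1 poly \<Rightarrow> 'a poly" where
  "compose_X4 p \<equiv> pcompose p ([:0, 1:] ^ 4)"

lemma compose_X4_eq_0_iff [simp]: "compose_X4 p = 0 \<longleftrightarrow> (p :: 'a::field poly) = 0"
  using pcompose_eq_0[of p "[:0, 1:] ^ 4"] by (auto simp: degree_linear_power)

lemma compose_X4_inj: "compose_X4 p = compose_X4 q \<Longrightarrow> (p :: 'a::field poly) = q"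
  using compose_X4_eq_0_iff[of "p - q"] by (simp add: pcompose_diff)

lemma Fract_compose_X4_add_mult:
  fixes a b c d :: "'a::field poly"
  assumes "b \<noteq> 0" "d \<noteq> 0"
  shows "Fract (compose_X4 a) (compose_X4 b) + Fract (compose_X4 c) (compose_X4 d) =
      Fract (compose_X4 (a * d + c * b)) (compose_X4 (b * d))"
    "Fract (compose_X4 a) (compose_X4 b) * Fract (compose_X4 c) (compose_X4 d) =
      Fract (compose_X4 (a * c)) (compose_X4 (b * d))"
  using assms by (simp_all add: pcompose_add pcompose_mult)

definition W4_fracts :: "'a::field poly fract set" where
  "W4_fracts = {Fract (compose_X4 a) (compose_X4 b) | a b. a \<in> int_polys \<and> b \<in> int_polys \<and> b \<noteq> 0}"

definition eval_W4 :: "'a::field \<Rightarrow> 'a poly fract \<Rightarrow> 'a" where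
  "eval_W4 s f = (SOME v. \<exists>a b. a \<in> int_polys \<and> b \<in> int_polys \<and> b \<noteq> 0 \<and>
     f = Fract (compose_X4 a) (compose_X4 b) \<and> v = poly a s / poly b s)"

lemma W4_fractsE:
  assumes "x \<in> W4_fracts"
  obtains a b where "a \<in> int_polys" "b \<in> int_polys" "b \<noteq> 0" "x = Fract (compose_X4 a) (compose_X4 b)"
  using assms unfolding W4_fracts_def by blast

lemma W4_fractsI:
  "a \<in> int_polys \<Longrightarrow> b \<in> int_polys \<Longrightarrow> b \<noteq> 0 \<Longrightarrow> Fract (compose_X4 a) (compose_X4 b) \<in> W4_fracts"
  unfolding W4_fracts_def by blast

lemma one_eq_Fract_compose_X4: "(1 :: 'a::field poly fract) = Fract (compose_X4 1) (compose_X4 1)"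
  by (simp add: pcompose_1 fract_collapse)

lemma W4_fracts_closed:
  fixes x y :: "'a::field poly fract"
  shows "1 \<in> W4_fracts" "x \<in> W4_fracts \<Longrightarrow> - x \<in> W4_fracts"
    "x \<in> W4_fracts \<Longrightarrow> inverse x \<in> W4_fracts"
    "x \<in> W4_fracts \<Longrightarrow> y \<in> W4_fracts \<Longrightarrow> x + y \<in> W4_fracts"
    "x \<in> W4_fracts \<Longrightarrow> y \<in> W4_fracts \<Longrightarrow> x * y \<in> W4_fracts"
proof -
  show "1 \<in> W4_fracts"
    by (subst one_eq_Fract_compose_X4) (rule W4_fractsI, simp_all add: int_polys_closed)
next
  assume "x \<in> W4_fracts"
  then obtain a b where ab: "a \<in> int_polys" "b \<in> int_polys" "b \<noteq> 0"
    "x = Fract (compose_X4 a) (compose_X4 b)"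
    by (rule W4_fractsE)
  then have "- x = Fract (compose_X4 (- a)) (compose_X4 b)"
    by (simp add: pcompose_uminus)
  with ab show "- x \<in> W4_fracts"
    by (simp add: W4_fractsI int_polys_closed)
  show "inverse x \<in> W4_fracts"
  proof (cases "a = 0")
    case True
    with ab(4) show ?thesis
      using W4_fractsI[OF int_polys_closed(1,2)] by (simp add: fract_collapse)
  qed (use ab in \<open>simp add: W4_fractsI\<close>)
  assume "y \<in> W4_fracts"
  then obtain c d where cd: "c \<in> int_polys" "d \<in> int_polys" "d \<noteq> 0"
    "y = Fract (compose_X4 c) (compose_X4 d)"
    by (rule W4_fractsE)
  show "x + y \<in> W4_fracts" "x * y \<in> W4_fracts"
    unfolding ab(4) cd(4) Fract_compose_X4_add_mult[OF ab(3) cd(3)]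
    using ab cd by (simp_all add: W4_fractsI int_polys_closed)
qed

lemma W4_eq_Fract: "(W ^ 4 :: 'a::field poly fract) = Fract (compose_X4 [:0, 1:]) (compose_X4 1)"
  by (simp add: W_eq_to_fract pcompose_pCons pcompose_1 flip: to_fract_def)

lemma W4_in_W4_fracts: "W ^ 4 \<in> W4_fracts"
  unfolding W4_eq_Fract by (rule W4_fractsI) (simp_all add: int_polys_closed)

context
  fixes s :: "'a::field"
  assumes s: "\<And>q. q \<in> int_polys \<Longrightarrow> q \<noteq> 0 \<Longrightarrow> poly q s \<noteq> 0"
begin

lemma eval_W4_Fract:
  assumes "a \<in> int_polys" "b \<in> int_polys" "b \<noteq> 0"
  shows "eval_W4 s (Fract (compose_X4 a) (compose_X4 b)) = poly a s / poly b s"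
  unfolding eval_W4_def
proof (rule someI2, intro exI conjI)
  fix v
  assume "\<exists>a' b'. a' \<in> int_polys \<and> b' \<in> int_polys \<and> b' \<noteq> 0 \<and>
    Fract (compose_X4 a) (compose_X4 b) = Fract (compose_X4 a') (compose_X4 b') \<and>
    v = poly a' s / poly b' s"
  then obtain a' b' where a'b': "b' \<in> int_polys" "b' \<noteq> 0" "v = poly a' s / poly b' s"
    and "Fract (compose_X4 a) (compose_X4 b) = Fract (compose_X4 a') (compose_X4 b')"
    by blast
  with assms(3) have "compose_X4 (a * b') = compose_X4 (a' * b)"
    by (simp add: eq_fract pcompose_mult)
  then have "poly a s * poly b' s = poly a' s * poly b s"
    by (metis compose_X4_inj poly_mult)
  with s[OF assms(2,3)] s[OF a'b'(1,2)] show "v = poly a s / poly b s"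
    by (simp add: a'b'(3) field_simps)
qed (use assms in auto)

lemma subfield_hom_eval_W4: "subfield_hom W4_fracts (eval_W4 s)"
proof
  show "eval_W4 s 1 = 1"
    by (subst one_eq_Fract_compose_X4, subst eval_W4_Fract) (simp_all add: int_polys_closed)
next
  fix x y :: "'a poly fract"
  assume "x \<in> W4_fracts" "y \<in> W4_fracts"
  then obtain a b c d where ab: "a \<in> int_polys" "b \<in> int_polys" "b \<noteq> 0"
      "x = Fract (compose_X4 a) (compose_X4 b)"
    and cd: "c \<in> int_polys" "d \<in> int_polys" "d \<noteq> 0" "y = Fract (compose_X4 c) (compose_X4 d)"
    by (meson W4_fractsE)
  show "eval_W4 s (x + y) = eval_W4 s x + eval_W4 s y" "eval_W4 s (x * y) = eval_W4 s x * eval_W4 s y"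
    unfolding ab(4) cd(4) Fract_compose_X4_add_mult[OF ab(3) cd(3)]
    using ab cd s[of b] s[of d] by (simp_all add: eval_W4_Fract int_polys_closed field_simps)
next
  fix x :: "'a poly fract"
  assume "x \<in> W4_fracts" and x0: "eval_W4 s x = 0"
  from \<open>x \<in> W4_fracts\<close> obtain a b where ab: "a \<in> int_polys" "b \<in> int_polys" "b \<noteq> 0"
    "x = Fract (compose_X4 a) (compose_X4 b)"
    by (rule W4_fractsE)
  with x0 s[of b] have "poly a s = 0"
    by (simp add: eval_W4_Fract)
  with ab(1) s[of a] have "a = 0"
    by blast
  with ab(4) show "x = 0"
    by (simp add: fract_collapse)
qed (simp_all add: W4_fracts_closed)

lemma eval_W4_W4: "eval_W4 s (W ^ 4) = s"
  unfolding W4_eq_Fract by (subst eval_W4_Fract) (simp_all add: int_polys_closed)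

end

lemma poly_W_int_coeffs:
  fixes q :: "'a::field poly fract poly"
  assumes "\<forall>i. coeff q i \<in> range of_int"
  shows "\<exists>p. poly q W = Fract p 1 \<and> (q \<noteq> 0 \<longrightarrow> p \<noteq> 0)"
  using assms
proof (induction q)
  case (pCons c r)
  then obtain p where p: "poly r W = Fract p 1" "r \<noteq> 0 \<longrightarrow> p \<noteq> 0"
    by (metis coeff_pCons_Suc)
  obtain k where k: "c = Fract (of_int k) 1"
    using pCons.prems coeff_pCons_0[of c r] by (metis of_int_fract rangeE)
  have "poly (pCons c r) W = Fract (pCons (of_int k) p) 1"
    using p k by (simp add: W_def of_int_poly algebra_simps)
  moreover have "pCons (of_int k) p \<noteq> 0" if "pCons c r \<noteq> 0"
    using that p k by (auto simp: Fract_eq_0_iff of_int_poly)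
  ultimately show ?case
    by blast
qed (auto intro!: exI[of _ 0] simp: fract_collapse)

lemma W_transcendental: "transcendental_over_prime_field (W :: 'a::field poly fract)"
  unfolding transcendental_over_prime_field_def
  using poly_W_int_coeffs by (fastforce simp: Fract_eq_0_iff)

theorem infinite_order_of_transcendental:
  fixes t :: "'a::field"
  assumes "CHAR('a) \<noteq> 2" and "transcendental_over_prime_field t"
  shows "on_curve t (- (t ^ 3)) (Some (- t, t\<^sup>2))" "ec_infinite_order t (- (t ^ 3)) (Some (- t, t\<^sup>2))"
proof -
  show "on_curve t (- (t ^ 3)) (Some (- t, t\<^sup>2))"
    by (simp add: on_curve_def power2_eq_square power3_eq_cube)
  have t: "poly q t \<noteq> 0" if "q \<in> int_polys" "q \<noteq> 0" for q
    using assms(2) that by (auto simp: transcendental_over_prime_field_def int_polys_def Ints_def)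
  then have "t \<noteq> 0"
    using t[of "[:0, 1:]"] by (simp add: int_polys_closed)
  have s: "poly q (inverse t) \<noteq> 0" if "q \<in> int_polys" "q \<noteq> 0" for q
    using t[of "reflect_poly q"] that \<open>t \<noteq> 0\<close> by (simp add: int_polys_closed poly_reflect_poly_nz)
  interpret subfield_hom "W4_fracts :: 'a poly fract set" "eval_W4 (inverse t)"
    using s by (rule subfield_hom_eval_W4)
  define T where "T = (inverse (W ^ 4) :: 'a poly fract)"
  have T: "T \<in> W4_fracts" "eval_W4 (inverse t) T = t"
    by (simp_all add: T_def W4_in_W4_fracts eval_W4_W4[OF s] inverse_closed hom_inverse)
  have "ec_infinite_order T (- (T ^ 3)) (Some (- T, T\<^sup>2))"
    unfolding T_def by (rule inverse_W4_infinite_order) (use assms(1) two_neq_zero_iff_CHAR in blast)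
  from ec_infinite_order_map_point[OF _ _ _ this] T
  show "ec_infinite_order t (- (t ^ 3)) (Some (- t, t\<^sup>2))"
    by (simp add: closed hom)
qed

theorem corollary2p6:
  shows
   "(\<forall>T :: 'p::prime_card mod_ring poly fract.
       CARD('p) \<noteq> 2 \<longrightarrow> T = Fract [:0, 1:] 1 \<longrightarrow>
         on_curve T (- (T ^ 3)) (Some (- T, T ^ 2)) \<and>
         ec_infinite_order T (- (T ^ 3)) (Some (- T, T ^ 2)))
    \<and>
    (\<forall>(p::nat) (t :: 'a::field).
       prime p \<longrightarrow> p \<noteq> 2 \<longrightarrow> CHAR('a) = p \<longrightarrow> transcendental_over_prime_field t \<longrightarrow>
         on_curve t (- (t ^ 3)) (Some (- t, t ^ 2)) \<and>
         ec_infinite_order t (- (t ^ 3)) (Some (- t, t ^ 2)))"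
proof (intro conjI allI impI)
  fix T :: "'p::prime_card mod_ring poly fract"
  assume "CARD('p) \<noteq> 2" "T = Fract [:0, 1:] 1"
  then have "CHAR('p mod_ring poly fract) \<noteq> 2" "transcendental_over_prime_field T"
    by (simp_all add: W_transcendental flip: W_def)
  from infinite_order_of_transcendental[OF this]
  show "on_curve T (- (T ^ 3)) (Some (- T, T ^ 2))" "ec_infinite_order T (- (T ^ 3)) (Some (- T, T ^ 2))"
    by simp_all
next
  fix p :: nat and t :: 'a
  assume "p \<noteq> 2" "CHAR('a) = p" "transcendental_over_prime_field t"
  with infinite_order_of_transcendental[of t]
  show "on_curve t (- (t ^ 3)) (Some (- t, t ^ 2))" "ec_infinite_order t (- (t ^ 3)) (Some (- t, t ^ 2))"
    by simp_all
qed

end
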